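(* Let $d=2$ or $d$ an odd prime, let $t\ge1$, let $V$ be a unitary on $(\mathbb{C}^d)^{\otimes t}$ in the third level of the Clifford hierarchy, and let $|\phi\rangle$ be a pure stabilizer state on $(\mathbb{C}^d)^{\otimes t}$. Then $|\psi\rangle=V|\phi\rangle$ satisfies $D_{\min,\mathbb{F}_{\rm STAB}}(\psi^{\otimes n})=D_{\max,\mathbb{F}_{\rm STAB}}(\psi^{\otimes n})$ for every integer $n\ge1$.
   Context: $\log$ base 2. On $\mathbb{C}^d$, $X|j\rangle=|j+1\bmod d\rangle$, $Z|j\rangle=e^{2\pi ij/d}|j\rangle$; the multi-qudit (generalized) Pauli group is generated by tensor products of powers of $X$ and $Z$ (with phases). The Clifford group consists of unitaries that map the Pauli group to itself under conjugation (up to phases). The third level of the Clifford hierarchy consists of unitaries $V$ with $VPV^\dagger$ Clifford for every Pauli operator $P$. Pure stabilizer states are states $C|0\rangle^{\otimes m}$ with $C$ Clifford, and $\mathbb{F}_{\rm STAB}$ is the convex hull of pure stabilizer states on the relevant number of qudits (here $tn$). $D_{\min,\mathbb{F}}(\rho)=\inf_{\sigma\in\mathbb{F}}(-\log\mathrm{Tr}[\Pi_\rho\sigma])$; $D_{\max,\mathbb{F}}(\rho)=\inf\{\log(1+s):\frac{\rho+s\tau}{1+s}\in\mathbb{F},\tau\text{ a state}\}$. *)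

theory Defs
  imports Complex_Main "Jordan_Normal_Form.Matrix" "HOL-Library.Extended_Real"
begin

definition adj :: "complex mat \<Rightarrow> complex mat" where
  "adj A = mat (dim_col A) (dim_row A) (\<lambda>(i,j). cnj (A $$ (j,i)))"

definition tr :: "complex mat \<Rightarrow> complex" where
  "tr A = (\<Sum>i<dim_row A. A $$ (i,i))"

definition unitary :: "nat \<Rightarrow> complex mat \<Rightarrow> bool" where
  "unitary N U \<longleftrightarrow> U \<in> carrier_mat N N \<and> U * adj U = 1\<^sub>m N \<and> adj U * U = 1\<^sub>m N"

definition kron :: "complex mat \<Rightarrow> complex mat \<Rightarrow> complex mat" where
  "kron A B = mat (dim_row A * dim_row B) (dim_col A * dim_col B)
     (\<lambda>(i,j). A $$ (i div dim_row B, j div dim_col B) * B $$ (i mod dim_row B, j mod dim_col B))"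

fun kron_pow :: "complex mat \<Rightarrow> nat \<Rightarrow> complex mat" where
  "kron_pow A 0 = 1\<^sub>m 1"
| "kron_pow A (Suc n) = kron A (kron_pow A n)"

definition proj_vec :: "complex vec \<Rightarrow> complex mat" where
  "proj_vec v = mat (dim_vec v) (dim_vec v) (\<lambda>(i,j). v $ i * cnj (v $ j))"

definition psd :: "nat \<Rightarrow> complex mat \<Rightarrow> bool" where
  "psd N A \<longleftrightarrow> A \<in> carrier_mat N N \<and>
     (\<forall>v \<in> carrier_vec N. let q = (\<Sum>i<N. cnj (v $ i) * (A *\<^sub>v v) $ i) in Im q = 0 \<and> Re q \<ge> 0)"

definition is_state :: "nat \<Rightarrow> complex mat \<Rightarrow> bool" where
  "is_state N \<rho> \<longleftrightarrow> psd N \<rho> \<and> tr \<rho> = 1"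

definition supp_proj :: "nat \<Rightarrow> complex mat \<Rightarrow> complex mat" where
  "supp_proj N \<rho> = (THE P. P \<in> carrier_mat N N \<and> adj P = P \<and> P * P = P \<and>
      {P *\<^sub>v x | x. x \<in> carrier_vec N} = {\<rho> *\<^sub>v x | x. x \<in> carrier_vec N})"

definition X_op :: "nat \<Rightarrow> complex mat" where
  "X_op d = mat d d (\<lambda>(i,j). if i = (j + 1) mod d then 1 else 0)"

definition Z_op :: "nat \<Rightarrow> complex mat" where
  "Z_op d = mat d d (\<lambda>(i,j). if i = j then exp (2 * pi * \<i> * of_nat j / of_nat d) else 0)"

fun pauli_string :: "nat \<Rightarrow> (nat \<times> nat) list \<Rightarrow> complex mat" where
  "pauli_string d [] = 1\<^sub>m 1"
| "pauli_string d ((a,b) # ps) = kron (X_op d ^\<^sub>m a * Z_op d ^\<^sub>m b) (pauli_string d ps)"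

definition pauli_group :: "nat \<Rightarrow> nat \<Rightarrow> complex mat set" where
  "pauli_group d m = {c \<cdot>\<^sub>m pauli_string d ps | c ps. cmod c = 1 \<and> length ps = m}"

definition clifford :: "nat \<Rightarrow> nat \<Rightarrow> complex mat set" where
  "clifford d m = {U. unitary (d ^ m) U \<and>
     (\<forall>P \<in> pauli_group d m. U * P * adj U \<in> pauli_group d m)}"

definition clifford_level3 :: "nat \<Rightarrow> nat \<Rightarrow> complex mat set" where
  "clifford_level3 d m = {V. unitary (d ^ m) V \<and>
     (\<forall>P \<in> pauli_group d m. V * P * adj V \<in> clifford d m)}"

definition stab_vecs :: "nat \<Rightarrow> nat \<Rightarrow> complex vec set" where
  "stab_vecs d m = {C *\<^sub>v unit_vec (d ^ m) 0 | C. C \<in> clifford d m}"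

definition F_STAB :: "nat \<Rightarrow> nat \<Rightarrow> complex mat set" where
  "F_STAB d m = {\<sigma>. \<exists>(K::nat) p vs. (\<forall>k<K. p k \<ge> (0::real) \<and> vs k \<in> stab_vecs d m) \<and>
      (\<Sum>k<K. p k) = 1 \<and>
      \<sigma> = mat (d ^ m) (d ^ m) (\<lambda>(i,j). \<Sum>k<K. of_real (p k) * proj_vec (vs k) $$ (i,j))}"

definition D_min :: "nat \<Rightarrow> complex mat set \<Rightarrow> complex mat \<Rightarrow> ereal" where
  "D_min N F \<rho> = (INF \<sigma>\<in>F. (let q = Re (tr (supp_proj N \<rho> * \<sigma>)) in
      if q > 0 then ereal (- log 2 q) else \<infinity>))"

definition D_max :: "nat \<Rightarrow> complex mat set \<Rightarrow> complex mat \<Rightarrow> ereal" where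
  "D_max N F \<rho> = (INF s\<in>{s::real. s \<ge> 0 \<and> (\<exists>\<tau>. is_state N \<tau> \<and>
        (1 / (1 + s)) \<cdot>\<^sub>m (\<rho> + of_real s \<cdot>\<^sub>m \<tau>) \<in> F)}. ereal (log 2 (1 + s)))"

end

theory Submission
  imports Defs
begin

text \<open>Let \<open>\<psi> = V |\<phi>\<rangle> = W |0\<rangle>\<close> with \<open>W = V C\<close> and \<open>C\<close> Clifford. Conjugating the diagonal
  Pauli operators \<open>Z^b\<close> by \<open>W\<close> gives Clifford unitaries (this is where the third level of the
  hierarchy enters) which fix \<open>\<psi>\<close> and average to \<open>|\<psi>\<rangle>\<langle>\<psi>|\<close>; their tensor products do the same
  for the \<open>n\<close>-fold tensor power of \<open>\<psi>\<close>. Twirling a free state \<open>\<sigma>\<close> over such a family gives a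
  free state \<open>S\<close> with eigenvector \<open>\<psi>\<close> for the eigenvalue \<open>q = \<langle>\<psi>|\<sigma>|\<psi>\<rangle>\<close>, so
  \<open>S \<ge> q |\<psi>\<rangle>\<langle>\<psi>|\<close> and \<open>S\<close> witnesses \<open>D_max \<le> - log q\<close>. Taking the infimum over \<open>\<sigma>\<close> gives
  \<open>D_max \<le> D_min\<close>; the converse inequality holds for every pure state.\<close>

lemma sum_lessThan_mult_split:
  "(\<Sum>k<b * e. g k) = (\<Sum>i<b. \<Sum>j<e. g (i * e + j :: nat))"
proof -
  have "(\<Sum>k<b * e. g k) = (\<Sum>i<b. sum g {i * e..<i * e + e})"
    by (rule sum.nat_group[symmetric])
  also have "\<dots> = (\<Sum>i<b. \<Sum>j<e. g (i * e + j))"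
  proof (rule sum.cong[OF refl])
    fix i
    have "sum g {i * e..<i * e + e} = (\<Sum>j\<in>{0..<e}. g (j + i * e))"
      using sum.shift_bounds_nat_ivl[of g 0 "i * e" e] by (simp add: add.commute)
    then show "sum g {i * e..<i * e + e} = (\<Sum>j<e. g (i * e + j))"
      by (simp add: atLeast0LessThan ac_simps)
  qed
  finally show ?thesis .
qed

lemma mult_index_lt: "i < b \<Longrightarrow> j < e \<Longrightarrow> i * e + j < b * (e :: nat)"
proof -
  assume "i < b" "j < e"
  then have "i * e + j < i * e + e" by simp
  also have "\<dots> = Suc i * e" by simp
  also have "\<dots> \<le> b * e" using \<open>i < b\<close> by (intro mult_le_mono1) simp
  finally show ?thesis .
qed

lemma div_lt: "(i::nat) < a * b \<Longrightarrow> i div b < a"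
  by (simp add: less_mult_imp_div_less)

lemma mod_lt: "(i::nat) < a * b \<Longrightarrow> i mod b < b"
  by (metis mod_less_divisor mult_0_right not_less_zero gr0I)

lemma index_mult_mat_sum:
  "i < dim_row A \<Longrightarrow> j < dim_col B \<Longrightarrow> dim_col A = dim_row B \<Longrightarrow>
   (A * B) $$ (i, j) = (\<Sum>k<dim_row B. A $$ (i, k) * B $$ (k, j))"
  by (simp add: scalar_prod_def lessThan_atLeast0)

lemma index_mult_mat_vec_sum:
  "i < dim_row A \<Longrightarrow> dim_col A = dim_vec v \<Longrightarrow> (A *\<^sub>v v) $ i = (\<Sum>k<dim_vec v. A $$ (i, k) * v $ k)"
  by (simp add: scalar_prod_def lessThan_atLeast0)

lemma index_mult_unit_vec:
  fixes A :: "complex mat"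
  assumes A: "A \<in> carrier_mat N N" and i: "i < N" and j: "j < N"
  shows "(A *\<^sub>v unit_vec N j) $ i = A $$ (i, j)"
proof -
  have "(A *\<^sub>v unit_vec N j) $ i = (\<Sum>k<N. A $$ (i, k) * (if k = j then 1 else 0))"
    using A i by (subst index_mult_mat_vec_sum) (auto simp: unit_vec_def)
  also have "\<dots> = (\<Sum>k<N. if k = j then A $$ (i, k) else 0)"
    by (rule sum.cong) auto
  also have "\<dots> = A $$ (i, j)" using j by simp
  finally show ?thesis .
qed

lemma mat_eqI_mult_vec:
  fixes A B :: "complex mat"
  assumes A: "A \<in> carrier_mat N N" and B: "B \<in> carrier_mat N N"
    and eq: "\<And>x. x \<in> carrier_vec N \<Longrightarrow> A *\<^sub>v x = B *\<^sub>v x"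
  shows "A = B"
proof (rule eq_matI)
  fix i j assume "i < dim_row B" "j < dim_col B"
  then have i: "i < N" and j: "j < N" using B by auto
  have "A $$ (i, j) = (A *\<^sub>v unit_vec N j) $ i" using index_mult_unit_vec[OF A i j] by simp
  also have "\<dots> = (B *\<^sub>v unit_vec N j) $ i" using eq[of "unit_vec N j"] by simp
  also have "\<dots> = B $$ (i, j)" using index_mult_unit_vec[OF B i j] by simp
  finally show "A $$ (i, j) = B $$ (i, j)" .
qed (use A B in auto)

lemma adj_dims [simp]: "dim_row (adj A) = dim_col A" "dim_col (adj A) = dim_row A"
  by (auto simp: adj_def)

lemma adj_index [simp]: "i < dim_col A \<Longrightarrow> j < dim_row A \<Longrightarrow> adj A $$ (i, j) = cnj (A $$ (j, i))"
  by (simp add: adj_def)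

lemma adj_carrier [simp]: "A \<in> carrier_mat n m \<Longrightarrow> adj A \<in> carrier_mat m n"
  by auto

lemma adj_mult: "dim_col A = dim_row B \<Longrightarrow> adj (A * B) = adj B * adj A"
  by (rule eq_matI) (auto simp: index_mult_mat_sum mult.commute simp del: index_mult_mat(1))

lemma adj_one [simp]: "adj (1\<^sub>m n) = 1\<^sub>m n"
  by (rule eq_matI) auto

lemma unitary_carrier: "unitary N U \<Longrightarrow> U \<in> carrier_mat N N"
  by (simp add: unitary_def)

lemma unitary_mult:
  assumes "unitary N U" "unitary N W"
  shows "unitary N (U * W)"
proof -
  have U: "U \<in> carrier_mat N N" and W: "W \<in> carrier_mat N N"
    using assms by (auto simp: unitary_def)
  have aU: "adj U \<in> carrier_mat N N" and aW: "adj W \<in> carrier_mat N N" using U W by auto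
  have a: "adj (U * W) = adj W * adj U" using U W by (simp add: adj_mult)
  have "U * W * (adj W * adj U) = U * (W * (adj W * adj U))"
    by (rule assoc_mult_mat[OF U W mult_carrier_mat[OF aW aU]])
  also have "W * (adj W * adj U) = (W * adj W) * adj U"
    by (rule assoc_mult_mat[OF W aW aU, symmetric])
  also have "W * adj W = 1\<^sub>m N" using assms by (simp add: unitary_def)
  also have "1\<^sub>m N * adj U = adj U" by (rule left_mult_one_mat[OF aU])
  also have "U * adj U = 1\<^sub>m N" using assms by (simp add: unitary_def)
  finally have 1: "U * W * adj (U * W) = 1\<^sub>m N" unfolding a .
  have "adj W * adj U * (U * W) = adj W * (adj U * (U * W))"
    by (rule assoc_mult_mat[OF aW aU mult_carrier_mat[OF U W]])
  also have "adj U * (U * W) = (adj U * U) * W"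
    by (rule assoc_mult_mat[OF aU U W, symmetric])
  also have "adj U * U = 1\<^sub>m N" using assms by (simp add: unitary_def)
  also have "1\<^sub>m N * W = W" by (rule left_mult_one_mat[OF W])
  also have "adj W * W = 1\<^sub>m N" using assms by (simp add: unitary_def)
  finally have 2: "adj (U * W) * (U * W) = 1\<^sub>m N" unfolding a .
  show ?thesis using 1 2 U W by (simp add: unitary_def)
qed

lemma unitary_adj_mult_vec:
  assumes U: "unitary N U" and v: "v \<in> carrier_vec N"
  shows "adj U *\<^sub>v (U *\<^sub>v v) = v"
proof -
  have Uc: "U \<in> carrier_mat N N" using U by (rule unitary_carrier)
  have "adj U *\<^sub>v (U *\<^sub>v v) = (adj U * U) *\<^sub>v v"
    using assoc_mult_mat_vec[OF adj_carrier[OF Uc] Uc v] by simp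
  then show ?thesis using U v by (simp add: unitary_def)
qed

lemma unitary_fix_adj:
  assumes "unitary N U" "v \<in> carrier_vec N" "U *\<^sub>v v = v"
  shows "adj U *\<^sub>v v = v"
  using unitary_adj_mult_vec[OF assms(1,2)] assms(3) by simp

lemma kron_dims [simp]:
  "dim_row (kron A B) = dim_row A * dim_row B" "dim_col (kron A B) = dim_col A * dim_col B"
  by (auto simp: kron_def)

lemma kron_index:
  "i < dim_row A * dim_row B \<Longrightarrow> j < dim_col A * dim_col B \<Longrightarrow>
   kron A B $$ (i, j) = A $$ (i div dim_row B, j div dim_col B) * B $$ (i mod dim_row B, j mod dim_col B)"
  by (simp add: kron_def)

lemma kron_carrier [simp]:
  "A \<in> carrier_mat a b \<Longrightarrow> B \<in> carrier_mat c e \<Longrightarrow> kron A B \<in> carrier_mat (a * c) (b * e)"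
  by auto

lemma kron_mult:
  assumes A: "A \<in> carrier_mat a b" and B: "B \<in> carrier_mat c e"
    and C: "C \<in> carrier_mat b f" and D: "D \<in> carrier_mat e g"
  shows "kron A B * kron C D = kron (A * C) (B * D)"
proof (rule eq_matI)
  fix i j assume "i < dim_row (kron (A * C) (B * D))" "j < dim_col (kron (A * C) (B * D))"
  then have i: "i < a * c" and j: "j < f * g" using A B C D by auto
  have "(kron A B * kron C D) $$ (i, j) = (\<Sum>k<b * e. kron A B $$ (i, k) * kron C D $$ (k, j))"
    using i j A B C D by (subst index_mult_mat_sum) auto
  also have "\<dots> = (\<Sum>k1<b. \<Sum>k2<e. kron A B $$ (i, k1 * e + k2) * kron C D $$ (k1 * e + k2, j))"
    by (rule sum_lessThan_mult_split)
  also have "\<dots> = (\<Sum>k1<b. \<Sum>k2<e. (A $$ (i div c, k1) * C $$ (k1, j div g)) *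
                                     (B $$ (i mod c, k2) * D $$ (k2, j mod g)))"
  proof (intro sum.cong refl)
    fix k1 k2 assume k1: "k1 \<in> {..<b}" and k2: "k2 \<in> {..<e}"
    then have "k1 * e + k2 < b * e" by (simp add: mult_index_lt)
    moreover have "(k1 * e + k2) div e = k1" "(k1 * e + k2) mod e = k2" using k2 by auto
    ultimately show "kron A B $$ (i, k1 * e + k2) * kron C D $$ (k1 * e + k2, j) =
      (A $$ (i div c, k1) * C $$ (k1, j div g)) * (B $$ (i mod c, k2) * D $$ (k2, j mod g))"
      using A B C D i j by (simp add: kron_index)
  qed
  also have "\<dots> = (\<Sum>k1<b. A $$ (i div c, k1) * C $$ (k1, j div g)) *
                  (\<Sum>k2<e. B $$ (i mod c, k2) * D $$ (k2, j mod g))"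
    by (simp add: sum_product)
  also have "\<dots> = kron (A * C) (B * D) $$ (i, j)"
    using A B C D i j
    by (simp del: index_mult_mat(1) add: kron_index index_mult_mat_sum div_lt mod_lt)
  finally show "(kron A B * kron C D) $$ (i, j) = kron (A * C) (B * D) $$ (i, j)" .
qed (use A B C D in auto)

lemma adj_kron: "adj (kron A B) = kron (adj A) (adj B)"
  by (rule eq_matI) (auto simp: kron_index div_lt mod_lt)

lemma kron_smult: "kron (a \<cdot>\<^sub>m A) (b \<cdot>\<^sub>m B) = (a * b) \<cdot>\<^sub>m kron A B"
  by (rule eq_matI) (auto simp: kron_index div_lt mod_lt)

lemma kron_one: "kron (1\<^sub>m a) (1\<^sub>m b) = 1\<^sub>m (a * b)"
proof (rule eq_matI)
  fix i j assume "i < dim_row (1\<^sub>m (a * b))" "j < dim_col (1\<^sub>m (a * b))"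
  then have i: "i < a * b" and j: "j < a * b" by auto
  have "(i div b = j div b \<and> i mod b = j mod b) = (i = j)"
    by (metis div_mult_mod_eq)
  then show "kron (1\<^sub>m a) (1\<^sub>m b) $$ (i, j) = 1\<^sub>m (a * b) $$ (i, j)"
    using i j by (auto simp: kron_index div_lt mod_lt)
qed auto

lemma kron_one_left: "kron (1\<^sub>m 1) A = A"
  by (rule eq_matI) (auto simp: kron_index)

lemma kron_assoc: "kron (kron A B) C = kron A (kron B C)"
proof (rule eq_matI)
  fix i j assume "i < dim_row (kron A (kron B C))" "j < dim_col (kron A (kron B C))"
  let ?b = "dim_row B" and ?c = "dim_row C" and ?b' = "dim_col B" and ?c' = "dim_col C"
  have i: "i < dim_row A * (?b * ?c)" and j: "j < dim_col A * (?b' * ?c')"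
    using \<open>i < _\<close> \<open>j < _\<close> by auto
  have digits: "k div z div y = k div (y * z)" "k div z mod y = k mod (y * z) div z"
    "k mod z = k mod (y * z) mod z" for k y z :: nat
  proof -
    show "k div z div y = k div (y * z)" by (metis div_mult2_eq mult.commute)
    show "k mod z = k mod (y * z) mod z" by (simp add: mod_mod_cancel)
    show "k div z mod y = k mod (y * z) div z"
    proof (cases "z = 0")
      case False
      have "k mod (z * y) = z * (k div z mod y) + k mod z" by (rule mod_mult2_eq)
      then show ?thesis using False by (simp add: mult.commute)
    qed simp
  qed
  have ij: "i div ?c div ?b = i div (?b * ?c)" "i div ?c mod ?b = i mod (?b * ?c) div ?c"
    "i mod ?c = i mod (?b * ?c) mod ?c" "j div ?c' div ?b' = j div (?b' * ?c')"
    "j div ?c' mod ?b' = j mod (?b' * ?c') div ?c'" "j mod ?c' = j mod (?b' * ?c') mod ?c'"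
    by (rule digits)+
  have "i div ?c < dim_row A * ?b" using i by (simp add: div_lt mult.assoc mult.commute[of ?b])
  moreover have "j div ?c' < dim_col A * ?b'" using j by (simp add: div_lt mult.assoc mult.commute[of ?b'])
  ultimately show "kron (kron A B) C $$ (i, j) = kron A (kron B C) $$ (i, j)"
    using i j by (simp add: kron_index div_lt mod_lt mult.assoc) (simp add: ij)
qed (auto simp: mult.assoc)

lemma kron_pow_carrier: "P \<in> carrier_mat m m \<Longrightarrow> kron_pow P n \<in> carrier_mat (m ^ n) (m ^ n)"
  by (induction n) auto

definition vec_kron :: "complex vec \<Rightarrow> complex vec \<Rightarrow> complex vec" where
  "vec_kron u v = vec (dim_vec u * dim_vec v) (\<lambda>i. u $ (i div dim_vec v) * v $ (i mod dim_vec v))"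

fun vec_kron_pow :: "complex vec \<Rightarrow> nat \<Rightarrow> complex vec" where
  "vec_kron_pow v 0 = vec 1 (\<lambda>_. 1)"
| "vec_kron_pow v (Suc n) = vec_kron v (vec_kron_pow v n)"

fun kron_list :: "('a \<Rightarrow> complex mat) \<Rightarrow> 'a list \<Rightarrow> complex mat" where
  "kron_list f [] = 1\<^sub>m 1"
| "kron_list f (x # xs) = kron (f x) (kron_list f xs)"

lemma vec_kron_dim [simp]: "dim_vec (vec_kron u v) = dim_vec u * dim_vec v"
  by (simp add: vec_kron_def)

lemma vec_kron_index:
  "i < dim_vec u * dim_vec v \<Longrightarrow> vec_kron u v $ i = u $ (i div dim_vec v) * v $ (i mod dim_vec v)"
  by (simp add: vec_kron_def)

lemma vec_kron_pow_dim [simp]: "dim_vec (vec_kron_pow v n) = dim_vec v ^ n"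
  by (induction n) auto

lemma vec_kron_unit_vec:
  assumes "a > 0" "b > 0"
  shows "vec_kron (unit_vec a 0) (unit_vec b 0) = unit_vec (a * b) 0"
proof (rule eq_vecI)
  fix i assume "i < dim_vec (unit_vec (a * b) 0)"
  then have i: "i < a * b" by simp
  have "(i div b = 0 \<and> i mod b = 0) = (i = 0)"
    by (metis div_mult_mod_eq mult_zero_right add_0 div_0 mod_0)
  then show "vec_kron (unit_vec a 0) (unit_vec b 0) $ i = unit_vec (a * b) 0 $ i"
    using i assms by (auto simp: vec_kron_index unit_vec_def div_lt mod_lt)
qed simp

lemma vec_kron_pow_unit_vec: "d > 0 \<Longrightarrow> vec_kron_pow (unit_vec d 0) n = unit_vec (d ^ n) 0"
proof (induction n)
  case 0
  show ?case by (rule eq_vecI) (auto simp: unit_vec_def)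
next
  case (Suc n)
  then show ?case using vec_kron_unit_vec[of d "d ^ n"] by simp
qed

lemma kron_list_carrier:
  "\<forall>x\<in>set xs. f x \<in> carrier_mat m m \<Longrightarrow> kron_list f xs \<in> carrier_mat (m ^ length xs) (m ^ length xs)"
  by (induction xs) auto

lemma kron_mult_vec_kron:
  assumes A: "A \<in> carrier_mat a b" and B: "B \<in> carrier_mat c e"
    and u: "u \<in> carrier_vec b" and v: "v \<in> carrier_vec e"
  shows "kron A B *\<^sub>v vec_kron u v = vec_kron (A *\<^sub>v u) (B *\<^sub>v v)"
proof (rule eq_vecI)
  fix i assume "i < dim_vec (vec_kron (A *\<^sub>v u) (B *\<^sub>v v))"
  then have i: "i < a * c" using A B by simp
  have "(kron A B *\<^sub>v vec_kron u v) $ i = (\<Sum>k<b * e. kron A B $$ (i, k) * vec_kron u v $ k)"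
    using i A B u v by (subst index_mult_mat_vec_sum) auto
  also have "\<dots> = (\<Sum>k1<b. \<Sum>k2<e. kron A B $$ (i, k1 * e + k2) * vec_kron u v $ (k1 * e + k2))"
    by (rule sum_lessThan_mult_split)
  also have "\<dots> = (\<Sum>k1<b. \<Sum>k2<e. (A $$ (i div c, k1) * u $ k1) * (B $$ (i mod c, k2) * v $ k2))"
  proof (intro sum.cong refl)
    fix k1 k2 assume k1: "k1 \<in> {..<b}" and k2: "k2 \<in> {..<e}"
    then have "k1 * e + k2 < b * e" by (simp add: mult_index_lt)
    moreover have "(k1 * e + k2) div e = k1" "(k1 * e + k2) mod e = k2" using k2 by auto
    ultimately show "kron A B $$ (i, k1 * e + k2) * vec_kron u v $ (k1 * e + k2) =
      (A $$ (i div c, k1) * u $ k1) * (B $$ (i mod c, k2) * v $ k2)"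
      using A B u v i by (simp add: kron_index vec_kron_index)
  qed
  also have "\<dots> = (\<Sum>k1<b. A $$ (i div c, k1) * u $ k1) * (\<Sum>k2<e. B $$ (i mod c, k2) * v $ k2)"
    by (simp add: sum_product)
  also have "\<dots> = vec_kron (A *\<^sub>v u) (B *\<^sub>v v) $ i"
    using A B u v i
    by (simp del: index_mult_mat_vec add: vec_kron_index index_mult_mat_vec_sum div_lt mod_lt)
  finally show "(kron A B *\<^sub>v vec_kron u v) $ i = vec_kron (A *\<^sub>v u) (B *\<^sub>v v) $ i" .
qed (use A B in auto)

lemma kron_list_mult_vec_kron_pow:
  assumes "\<forall>x\<in>set xs. f x \<in> carrier_mat m m \<and> f x *\<^sub>v v = v" and v: "v \<in> carrier_vec m"
  shows "kron_list f xs *\<^sub>v vec_kron_pow v (length xs) = vec_kron_pow v (length xs)"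
  using assms(1)
proof (induction xs)
  case Nil
  show ?case by (simp add: one_mult_mat_vec[of _ 1] carrier_vecI)
next
  case (Cons x xs)
  have fx: "f x \<in> carrier_mat m m" "f x *\<^sub>v v = v" using Cons.prems by auto
  have K: "kron_list f xs \<in> carrier_mat (m ^ length xs) (m ^ length xs)"
    using Cons.prems by (intro kron_list_carrier) auto
  have "vec_kron_pow v (length xs) \<in> carrier_vec (m ^ length xs)"
    using v by (intro carrier_vecI) auto
  then show ?case using kron_mult_vec_kron[OF fx(1) K v] Cons fx by simp
qed

lemma proj_vec_dims [simp]: "dim_row (proj_vec v) = dim_vec v" "dim_col (proj_vec v) = dim_vec v"
  by (auto simp: proj_vec_def)

lemma proj_vec_index: "i < dim_vec v \<Longrightarrow> j < dim_vec v \<Longrightarrow> proj_vec v $$ (i, j) = v $ i * cnj (v $ j)"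
  by (simp add: proj_vec_def)

lemma adj_proj_vec [simp]: "adj (proj_vec v) = proj_vec v"
  by (rule eq_matI) (auto simp: proj_vec_index)

lemma proj_vec_kron: "proj_vec (vec_kron u v) = kron (proj_vec u) (proj_vec v)"
  by (rule eq_matI) (auto simp: proj_vec_index kron_index vec_kron_index div_lt mod_lt)

lemma kron_pow_proj_vec: "kron_pow (proj_vec v) n = proj_vec (vec_kron_pow v n)"
proof (induction n)
  case 0
  show ?case by (rule eq_matI) (auto simp: proj_vec_index)
next
  case (Suc n)
  then show ?case by (simp add: proj_vec_kron)
qed

lemma sum_lists_length_Suc:
  "(\<Sum>xs\<in>{xs. set xs \<subseteq> A \<and> length xs = Suc n}. g xs) =
   (\<Sum>x\<in>A. \<Sum>xs\<in>{xs. set xs \<subseteq> A \<and> length xs = n}. g (x # xs))"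
proof -
  let ?L = "{xs. set xs \<subseteq> A \<and> length xs = n}"
  have img: "{xs. set xs \<subseteq> A \<and> length xs = Suc n} = (\<lambda>(xs, x). x # xs) ` (?L \<times> A)"
    using lists_length_Suc_eq[of A n] by (auto simp: image_iff)
  have "inj_on (\<lambda>(xs, x). x # xs) (?L \<times> A)"
    by (auto simp: inj_on_def)
  then have "(\<Sum>xs\<in>{xs. set xs \<subseteq> A \<and> length xs = Suc n}. g xs) = (\<Sum>(xs, x)\<in>?L \<times> A. g (x # xs))"
    unfolding img by (subst sum.reindex) (auto simp: case_prod_beta comp_def)
  also have "\<dots> = (\<Sum>x\<in>A. \<Sum>xs\<in>?L. g (x # xs))"
    by (simp add: sum.cartesian_product[symmetric] sum.swap[of _ ?L])
  finally show ?thesis .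
qed

lemma sum_kron_list_index:
  assumes fA: "\<forall>a\<in>A. f a \<in> carrier_mat m m" and P: "P \<in> carrier_mat m m"
    and S: "\<forall>i<m. \<forall>j<m. (\<Sum>a\<in>A. f a $$ (i, j)) = c * P $$ (i, j)"
  shows "\<forall>i<m ^ n. \<forall>j<m ^ n.
    (\<Sum>xs\<in>{xs. set xs \<subseteq> A \<and> length xs = n}. kron_list f xs $$ (i, j)) = c ^ n * kron_pow P n $$ (i, j)"
proof (induction n)
  case 0
  have "{xs. set xs \<subseteq> A \<and> length xs = 0} = {[]}" by auto
  then show ?case by simp
next
  case (Suc n)
  let ?L = "{xs. set xs \<subseteq> A \<and> length xs = n}"
  show ?case
  proof (intro allI impI)
    fix i j assume "i < m ^ Suc n" "j < m ^ Suc n"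
    then have i: "i < m * m ^ n" and j: "j < m * m ^ n" by auto
    have "(\<Sum>xs\<in>{xs. set xs \<subseteq> A \<and> length xs = Suc n}. kron_list f xs $$ (i, j))
        = (\<Sum>a\<in>A. \<Sum>xs\<in>?L. f a $$ (i div m ^ n, j div m ^ n) * kron_list f xs $$ (i mod m ^ n, j mod m ^ n))"
      unfolding sum_lists_length_Suc
    proof (intro sum.cong refl)
      fix a xs assume "a \<in> A" "xs \<in> ?L"
      moreover from this have "kron_list f xs \<in> carrier_mat (m ^ n) (m ^ n)"
        using fA kron_list_carrier[of xs f m] by auto
      ultimately show "kron_list f (a # xs) $$ (i, j) =
          f a $$ (i div m ^ n, j div m ^ n) * kron_list f xs $$ (i mod m ^ n, j mod m ^ n)"
        using fA i j by (subst kron_list.simps, subst kron_index) auto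
    qed
    also have "\<dots> = (\<Sum>a\<in>A. f a $$ (i div m ^ n, j div m ^ n)) *
                    (\<Sum>xs\<in>?L. kron_list f xs $$ (i mod m ^ n, j mod m ^ n))"
      by (simp add: sum_product)
    also have "\<dots> = (c * P $$ (i div m ^ n, j div m ^ n)) * (c ^ n * kron_pow P n $$ (i mod m ^ n, j mod m ^ n))"
      using S Suc.IH i j by (simp add: div_lt mod_lt)
    also have "\<dots> = c ^ Suc n * kron_pow P (Suc n) $$ (i, j)"
      using kron_pow_carrier[OF P, of n] P i j by (simp add: kron_index)
    finally show "(\<Sum>xs\<in>{xs. set xs \<subseteq> A \<and> length xs = Suc n}. kron_list f xs $$ (i, j))
        = c ^ Suc n * kron_pow P (Suc n) $$ (i, j)" .
  qed
qed

section \<open>Pauli and Clifford operators\<close>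

lemma X_op_carrier [simp]: "X_op d \<in> carrier_mat d d"
  by (simp add: X_op_def)

lemma Z_op_carrier [simp]: "Z_op d \<in> carrier_mat d d"
  by (simp add: Z_op_def)

lemma pauli_string_carrier: "pauli_string d ps \<in> carrier_mat (d ^ length ps) (d ^ length ps)"
proof (induction ps)
  case (Cons p ps)
  obtain a b where p: "p = (a, b)" by fastforce
  have "X_op d ^\<^sub>m a * Z_op d ^\<^sub>m b \<in> carrier_mat d d"
    using pow_carrier_mat[OF X_op_carrier] pow_carrier_mat[OF Z_op_carrier] by (rule mult_carrier_mat)
  then show ?case using Cons p by simp
qed simp

lemma pauli_string_append: "pauli_string d (xs @ ys) = kron (pauli_string d xs) (pauli_string d ys)"
proof (induction xs)
  case Nil
  then show ?case using kron_one_left[of "pauli_string d ys"] by simp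
next
  case (Cons p xs)
  then show ?case by (cases p) (simp add: kron_assoc)
qed

lemma pauli_group_carrier: "P \<in> pauli_group d m \<Longrightarrow> P \<in> carrier_mat (d ^ m) (d ^ m)"
  unfolding pauli_group_def using pauli_string_carrier by fastforce

lemma pauli_string_in_pauli_group: "length ps = m \<Longrightarrow> pauli_string d ps \<in> pauli_group d m"
proof -
  assume "length ps = m"
  moreover have "pauli_string d ps = 1 \<cdot>\<^sub>m pauli_string d ps" by (rule eq_matI) auto
  ultimately show ?thesis unfolding pauli_group_def by (metis (mono_tags, lifting) mem_Collect_eq norm_one)
qed

lemma clifford_carrier: "U \<in> clifford d m \<Longrightarrow> U \<in> carrier_mat (d ^ m) (d ^ m)"
  by (simp add: clifford_def unitary_def)

lemma mult_conj_adj_mult: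
  assumes U: "U \<in> carrier_mat N N" and W: "W \<in> carrier_mat N N" and P: "P \<in> carrier_mat N N"
  shows "U * W * P * adj (U * W) = U * (W * P * adj W) * adj U"
proof -
  have aU: "adj U \<in> carrier_mat N N" and aW: "adj W \<in> carrier_mat N N" using U W by auto
  have X: "W * P \<in> carrier_mat N N" using W P by simp
  have "U * W * P * adj (U * W) = U * (W * P) * (adj W * adj U)"
    using U W P by (simp add: adj_mult assoc_mult_mat[OF U W P])
  also have "\<dots> = U * (W * P * (adj W * adj U))"
    by (rule assoc_mult_mat[OF U X mult_carrier_mat[OF aW aU]])
  also have "W * P * (adj W * adj U) = W * P * adj W * adj U"
    by (rule assoc_mult_mat[OF X aW aU, symmetric])
  also have "U * (W * P * adj W * adj U) = U * (W * P * adj W) * adj U"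
    using X aW aU by (intro assoc_mult_mat[OF U _ aU, symmetric]) auto
  finally show ?thesis .
qed

lemma clifford_mult:
  assumes U: "U \<in> clifford d m" and W: "W \<in> clifford d m"
  shows "U * W \<in> clifford d m"
proof -
  have "unitary (d ^ m) (U * W)" using U W by (intro unitary_mult) (auto simp: clifford_def)
  moreover have "U * W * P * adj (U * W) \<in> pauli_group d m" if P: "P \<in> pauli_group d m" for P
  proof -
    have "W * P * adj W \<in> pauli_group d m" using W P by (auto simp: clifford_def)
    then have "U * (W * P * adj W) * adj U \<in> pauli_group d m" using U by (auto simp: clifford_def)
    then show ?thesis
      using mult_conj_adj_mult[OF clifford_carrier[OF U] clifford_carrier[OF W] pauli_group_carrier[OF P]]
      by simp
  qed
  ultimately show ?thesis by (simp add: clifford_def)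
qed

lemma kron_conj_adj:
  assumes A: "A \<in> carrier_mat a a" and B: "B \<in> carrier_mat b b"
    and P: "P \<in> carrier_mat a a" and Q: "Q \<in> carrier_mat b b"
  shows "kron A B * kron P Q * adj (kron A B) = kron (A * P * adj A) (B * Q * adj B)"
  using assms by (simp add: kron_mult adj_kron kron_mult[of "A * P" a a "B * Q" b b "adj A" a "adj B" b])

lemma unitary_kron:
  assumes A: "unitary a A" and B: "unitary b B"
  shows "unitary (a * b) (kron A B)"
proof -
  have Ac: "A \<in> carrier_mat a a" and Bc: "B \<in> carrier_mat b b" using A B by (auto simp: unitary_def)
  have "kron A B * adj (kron A B) = kron (A * adj A) (B * adj B)"
    unfolding adj_kron using Ac Bc by (intro kron_mult) auto
  moreover have "adj (kron A B) * kron A B = kron (adj A * A) (adj B * B)"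
    unfolding adj_kron using Ac Bc by (intro kron_mult) auto
  ultimately show ?thesis using A B Ac Bc by (simp add: unitary_def kron_one)
qed

lemma clifford_conj_pauli_string:
  assumes "A \<in> clifford d m" "length ps = m"
  obtains c qs where "cmod c = 1" "length qs = m" "A * pauli_string d ps * adj A = c \<cdot>\<^sub>m pauli_string d qs"
  using assms pauli_string_in_pauli_group[OF assms(2)] unfolding clifford_def pauli_group_def by blast

lemma clifford_kron:
  assumes A: "A \<in> clifford d m1" and B: "B \<in> clifford d m2"
  shows "kron A B \<in> clifford d (m1 + m2)"
proof -
  have Ac: "A \<in> carrier_mat (d ^ m1) (d ^ m1)" and Bc: "B \<in> carrier_mat (d ^ m2) (d ^ m2)"
    using A B by (auto simp: clifford_carrier)
  have "unitary (d ^ m1 * d ^ m2) (kron A B)"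
    using A B by (intro unitary_kron) (auto simp: clifford_def)
  moreover have "kron A B * P * adj (kron A B) \<in> pauli_group d (m1 + m2)"
    if P_pauli: "P \<in> pauli_group d (m1 + m2)" for P
  proof -
    obtain c ps where c: "cmod c = 1" and ps: "length ps = m1 + m2" and P: "P = c \<cdot>\<^sub>m pauli_string d ps"
      using P_pauli unfolding pauli_group_def by blast
    let ?P1 = "pauli_string d (take m1 ps)" and ?P2 = "pauli_string d (drop m1 ps)"
    have P1: "?P1 \<in> carrier_mat (d ^ m1) (d ^ m1)" and P2: "?P2 \<in> carrier_mat (d ^ m2) (d ^ m2)"
      using pauli_string_carrier[of d "take m1 ps"] pauli_string_carrier[of d "drop m1 ps"] ps by auto
    obtain c1 q1 where c1: "cmod c1 = 1" "length q1 = m1" "A * ?P1 * adj A = c1 \<cdot>\<^sub>m pauli_string d q1"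
      using clifford_conj_pauli_string[OF A, of "take m1 ps"] ps by auto
    obtain c2 q2 where c2: "cmod c2 = 1" "length q2 = m2" "B * ?P2 * adj B = c2 \<cdot>\<^sub>m pauli_string d q2"
      using clifford_conj_pauli_string[OF B, of "drop m1 ps"] ps by auto
    have K: "kron A B \<in> carrier_mat (d ^ m1 * d ^ m2) (d ^ m1 * d ^ m2)"
      and KP: "kron ?P1 ?P2 \<in> carrier_mat (d ^ m1 * d ^ m2) (d ^ m1 * d ^ m2)"
      using Ac Bc P1 P2 by auto
    have "P = c \<cdot>\<^sub>m kron ?P1 ?P2"
      unfolding P pauli_string_append[symmetric] by simp
    then have "kron A B * P * adj (kron A B) = c \<cdot>\<^sub>m (kron A B * kron ?P1 ?P2 * adj (kron A B))"
      using K KP by (simp add: mult_smult_distrib mult_smult_assoc_mat[OF mult_carrier_mat[OF K KP] adj_carrier[OF K]])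
    also have "\<dots> = (c * (c1 * c2)) \<cdot>\<^sub>m pauli_string d (q1 @ q2)"
      using c1 c2 by (simp add: kron_conj_adj[OF Ac Bc P1 P2] kron_smult pauli_string_append)
                     (rule eq_matI, auto)
    finally show ?thesis
      using c c1 c2 unfolding pauli_group_def by (auto simp: norm_mult intro!: exI[of _ "q1 @ q2"])
  qed
  ultimately show ?thesis by (simp add: clifford_def power_add)
qed

lemma one_mat_in_clifford: "1\<^sub>m 1 \<in> clifford d 0"
proof -
  have "1\<^sub>m 1 * P * adj (1\<^sub>m 1) = P" if "P \<in> pauli_group d 0" for P
    using pauli_group_carrier[OF that] by simp
  then show ?thesis by (simp add: clifford_def unitary_def)
qed

lemma kron_list_clifford:
  "\<forall>x\<in>set xs. f x \<in> clifford d t \<Longrightarrow> kron_list f xs \<in> clifford d (t * length xs)"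
proof (induction xs)
  case Nil
  then show ?case using one_mat_in_clifford by simp
next
  case (Cons x xs)
  then have "kron (f x) (kron_list f xs) \<in> clifford d (t + t * length xs)"
    by (intro clifford_kron) auto
  then show ?case by simp
qed

lemma clifford_level3_conj_pauli:
  assumes V: "V \<in> clifford_level3 d m" and C: "C \<in> clifford d m" and P: "P \<in> pauli_group d m"
  shows "(V * C) * P * adj (V * C) \<in> clifford d m"
proof -
  have "C * P * adj C \<in> pauli_group d m" using C P by (simp add: clifford_def)
  then have "V * (C * P * adj C) * adj V \<in> clifford d m" using V by (simp add: clifford_level3_def)
  moreover have "V \<in> carrier_mat (d ^ m) (d ^ m)" using V by (simp add: clifford_level3_def unitary_def)
  ultimately show ?thesis
    using mult_conj_adj_mult[OF _ clifford_carrier[OF C] pauli_group_carrier[OF P]] by simp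
qed

lemma stab_vecs_clifford_closed:
  assumes g: "g \<in> clifford d m" and u: "u \<in> stab_vecs d m"
  shows "g *\<^sub>v u \<in> stab_vecs d m"
proof -
  obtain C where C: "C \<in> clifford d m" and u: "u = C *\<^sub>v unit_vec (d ^ m) 0"
    using u unfolding stab_vecs_def by blast
  have "g *\<^sub>v u = (g * C) *\<^sub>v unit_vec (d ^ m) 0"
    using u clifford_carrier[OF g] clifford_carrier[OF C] by simp
  then show ?thesis using clifford_mult[OF g C] unfolding stab_vecs_def by blast
qed

section \<open>Families of unitaries averaging to a pure state\<close>

definition averages_to_proj :: "nat \<Rightarrow> complex vec \<Rightarrow> 'a set \<Rightarrow> ('a \<Rightarrow> complex mat) \<Rightarrow> bool" where
  "averages_to_proj N \<Psi> I g \<longleftrightarrow> finite I \<and> I \<noteq> {} \<and>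
     (\<forall>x\<in>I. g x \<in> carrier_mat N N \<and> g x *\<^sub>v \<Psi> = \<Psi>) \<and>
     (\<forall>i<N. \<forall>j<N. (\<Sum>x\<in>I. g x $$ (i, j)) = of_nat (card I) * proj_vec \<Psi> $$ (i, j))"

lemma averages_to_proj_kron_list:
  assumes avg: "averages_to_proj N \<Psi> A f" and \<Psi>: "\<Psi> \<in> carrier_vec N"
  shows "averages_to_proj (N ^ n) (vec_kron_pow \<Psi> n) {xs. set xs \<subseteq> A \<and> length xs = n} (kron_list f)"
proof -
  let ?L = "{xs. set xs \<subseteq> A \<and> length xs = n}"
  have A: "finite A" "A \<noteq> {}" and f: "\<forall>a\<in>A. f a \<in> carrier_mat N N \<and> f a *\<^sub>v \<Psi> = \<Psi>"
    and avg_f: "\<forall>i<N. \<forall>j<N. (\<Sum>a\<in>A. f a $$ (i, j)) = of_nat (card A) * proj_vec \<Psi> $$ (i, j)"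
    using avg by (auto simp: averages_to_proj_def)
  obtain a where "a \<in> A" using A by blast
  then have "replicate n a \<in> ?L" by auto
  then have L: "finite ?L" "?L \<noteq> {}" using finite_lists_length_eq[OF A(1)] by auto
  have "\<forall>xs\<in>?L. kron_list f xs \<in> carrier_mat (N ^ n) (N ^ n)"
    using f kron_list_carrier[of _ f N] by fastforce
  moreover have "\<forall>xs\<in>?L. kron_list f xs *\<^sub>v vec_kron_pow \<Psi> n = vec_kron_pow \<Psi> n"
    using f kron_list_mult_vec_kron_pow[OF _ \<Psi>, of _ f] by fastforce
  moreover have "\<forall>i<N ^ n. \<forall>j<N ^ n. (\<Sum>xs\<in>?L. kron_list f xs $$ (i, j)) =
      of_nat (card ?L) * proj_vec (vec_kron_pow \<Psi> n) $$ (i, j)"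
  proof -
    have "proj_vec \<Psi> \<in> carrier_mat N N" using \<Psi> by auto
    then show ?thesis
      using sum_kron_list_index[of A f N "proj_vec \<Psi>" "of_nat (card A)" n] f avg_f
      by (simp add: card_lists_length_eq[OF A(1)] kron_pow_proj_vec of_nat_power)
  qed
  ultimately show ?thesis using L by (simp add: averages_to_proj_def)
qed

lemma index_conj_adj:
  assumes A: "A \<in> carrier_mat N N" and B: "B \<in> carrier_mat N N" and i: "i < N" and j: "j < N"
  shows "(A * B * adj A) $$ (i, j) = (\<Sum>a<N. \<Sum>b<N. A $$ (i, a) * B $$ (a, b) * cnj (A $$ (j, b)))"
proof -
  have "(A * B * adj A) $$ (i, j) = (\<Sum>b<N. (A * B) $$ (i, b) * adj A $$ (b, j))"
    using A B i j by (subst index_mult_mat_sum) auto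
  also have "\<dots> = (\<Sum>b<N. (\<Sum>a<N. A $$ (i, a) * B $$ (a, b)) * cnj (A $$ (j, b)))"
    using A B i j by (intro sum.cong refl) (subst index_mult_mat_sum, auto)
  also have "\<dots> = (\<Sum>b<N. \<Sum>a<N. A $$ (i, a) * B $$ (a, b) * cnj (A $$ (j, b)))"
    by (simp add: sum_distrib_right)
  also have "\<dots> = (\<Sum>a<N. \<Sum>b<N. A $$ (i, a) * B $$ (a, b) * cnj (A $$ (j, b)))"
    by (rule sum.swap)
  finally show ?thesis .
qed

lemma unitary_conj_mult_vec_fix:
  assumes W: "unitary N W" and g: "g \<in> carrier_mat N N" and \<Psi>: "\<Psi> \<in> carrier_vec N"
    and g\<Psi>: "g *\<^sub>v \<Psi> = \<Psi>"
  shows "(W * g * adj W) *\<^sub>v (W *\<^sub>v \<Psi>) = W *\<^sub>v \<Psi>"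
proof -
  have Wc: "W \<in> carrier_mat N N" using W by (rule unitary_carrier)
  have "(W * g * adj W) *\<^sub>v (W *\<^sub>v \<Psi>) = (W * g) *\<^sub>v (adj W *\<^sub>v (W *\<^sub>v \<Psi>))"
    using Wc g \<Psi> by (intro assoc_mult_mat_vec) auto
  also have "\<dots> = W *\<^sub>v (g *\<^sub>v \<Psi>)"
    unfolding unitary_adj_mult_vec[OF W \<Psi>] by (rule assoc_mult_mat_vec[OF Wc g \<Psi>])
  finally show ?thesis using g\<Psi> by simp
qed

lemma averages_to_proj_conj:
  assumes W: "unitary N W" and \<Psi>: "\<Psi> \<in> carrier_vec N" and avg: "averages_to_proj N \<Psi> I g"
  shows "averages_to_proj N (W *\<^sub>v \<Psi>) I (\<lambda>x. W * g x * adj W)"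
proof -
  have Wc: "W \<in> carrier_mat N N" using W by (rule unitary_carrier)
  have g: "\<forall>x\<in>I. g x \<in> carrier_mat N N \<and> g x *\<^sub>v \<Psi> = \<Psi>"
    and avg_g: "\<forall>i<N. \<forall>j<N. (\<Sum>x\<in>I. g x $$ (i, j)) = of_nat (card I) * proj_vec \<Psi> $$ (i, j)"
    using avg by (auto simp: averages_to_proj_def)
  have fix_conj: "(W * g x * adj W) *\<^sub>v (W *\<^sub>v \<Psi>) = W *\<^sub>v \<Psi>" if "x \<in> I" for x
    using g that by (intro unitary_conj_mult_vec_fix[OF W _ \<Psi>]) auto
  have avg_conj: "(\<Sum>x\<in>I. (W * g x * adj W) $$ (i, j)) = of_nat (card I) * proj_vec (W *\<^sub>v \<Psi>) $$ (i, j)"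
    if i: "i < N" and j: "j < N" for i j
  proof -
    have "(\<Sum>x\<in>I. (W * g x * adj W) $$ (i, j))
        = (\<Sum>x\<in>I. \<Sum>a<N. \<Sum>b<N. W $$ (i, a) * g x $$ (a, b) * cnj (W $$ (j, b)))"
      using g Wc i j by (intro sum.cong refl index_conj_adj) auto
    also have "\<dots> = (\<Sum>a<N. \<Sum>b<N. \<Sum>x\<in>I. W $$ (i, a) * g x $$ (a, b) * cnj (W $$ (j, b)))"
      by (subst sum.swap, rule sum.cong[OF refl], rule sum.swap)
    also have "\<dots> = (\<Sum>a<N. \<Sum>b<N. W $$ (i, a) * (\<Sum>x\<in>I. g x $$ (a, b)) * cnj (W $$ (j, b)))"
      by (simp add: sum_distrib_left sum_distrib_right)
    also have "\<dots> = (\<Sum>a<N. \<Sum>b<N. W $$ (i, a) * (of_nat (card I) * (\<Psi> $ a * cnj (\<Psi> $ b))) * cnj (W $$ (j, b)))"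
      using avg_g \<Psi> by (intro sum.cong refl) (simp add: proj_vec_index)
    also have "\<dots> = of_nat (card I) * (\<Sum>a<N. \<Sum>b<N. (W $$ (i, a) * \<Psi> $ a) * cnj (W $$ (j, b) * \<Psi> $ b))"
      by (auto simp: sum_distrib_left mult_ac intro!: sum.cong)
    also have "\<dots> = of_nat (card I) * ((\<Sum>a<N. W $$ (i, a) * \<Psi> $ a) * cnj (\<Sum>b<N. W $$ (j, b) * \<Psi> $ b))"
      by (simp only: cnj_sum sum_product)
    also have "\<dots> = of_nat (card I) * proj_vec (W *\<^sub>v \<Psi>) $$ (i, j)"
      using Wc \<Psi> i j by (simp add: proj_vec_index index_mult_mat_vec_sum del: index_mult_mat_vec)
    finally show ?thesis .
  qed
  have "W * g x * adj W \<in> carrier_mat N N" if "x \<in> I" for x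
    using g that Wc by auto
  with avg fix_conj avg_conj show ?thesis
    unfolding averages_to_proj_def by blast
qed

definition omega :: "nat \<Rightarrow> nat \<Rightarrow> complex" where
  "omega d j = exp (complex_of_real (2 * pi) * \<i> * of_nat j / of_nat d)"

lemma X_op_dims [simp]: "dim_row (X_op d) = d" "dim_col (X_op d) = d"
  by (simp_all add: X_op_def)

lemma Z_op_dims [simp]: "dim_row (Z_op d) = d" "dim_col (Z_op d) = d"
  by (simp_all add: Z_op_def)

lemma Z_op_omega: "Z_op d = mat d d (\<lambda>(i, j). if i = j then omega d j else 0)"
  unfolding Z_op_def omega_def by (rule refl)

lemma Z_op_pow: "Z_op d ^\<^sub>m b = mat d d (\<lambda>(i, j). if i = j then omega d j ^ b else 0)"
proof (induction b)
  case 0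
  show ?case by (rule eq_matI) auto
next
  case (Suc b)
  show ?case
  proof (rule eq_matI)
    fix i j assume "i < dim_row (mat d d (\<lambda>(i, j). if i = j then omega d j ^ Suc b else 0))"
      "j < dim_col (mat d d (\<lambda>(i, j). if i = j then omega d j ^ Suc b else 0))"
    then have i: "i < d" and j: "j < d" by auto
    have "(Z_op d ^\<^sub>m Suc b) $$ (i, j) = (\<Sum>k<d. (if i = k then omega d k ^ b else 0) * (if k = j then omega d j else 0))"
      using i j unfolding pow_mat.simps(2) Suc by (subst index_mult_mat_sum) (auto simp: Z_op_omega)
    also have "\<dots> = (\<Sum>k<d. if k = i then (if i = j then omega d j ^ Suc b else 0) else 0)"
      by (rule sum.cong) auto
    finally show "(Z_op d ^\<^sub>m Suc b) $$ (i, j) = mat d d (\<lambda>(i, j). if i = j then omega d j ^ Suc b else 0) $$ (i, j)"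
      using i j by simp
  qed (auto simp: Z_op_def)
qed

lemma omega_pow_eq_1: "d > 0 \<Longrightarrow> omega d j ^ d = 1"
proof -
  assume "d > 0"
  have "omega d j ^ d = exp (of_nat d * (2 * pi * \<i> * of_nat j / of_nat d))"
    unfolding omega_def by (rule exp_of_nat_mult[symmetric])
  also have "of_nat d * (2 * pi * \<i> * of_nat j / of_nat d) = of_nat j * (2 * of_real pi * \<i>)"
    using \<open>d > 0\<close> by (simp add: field_simps)
  also have "exp \<dots> = exp (2 * of_real pi * \<i>) ^ j" by (rule exp_of_nat_mult)
  finally show ?thesis by simp
qed

lemma omega_neq_1:
  assumes "0 < j" "j < d"
  shows "omega d j \<noteq> 1"
proof
  assume "omega d j = 1"
  define \<theta> where "\<theta> = 2 * pi * real j / real d"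
  have "omega d j = exp (\<i> * complex_of_real \<theta>)"
    unfolding omega_def \<theta>_def by (simp add: field_simps)
  then have "Re (exp (\<i> * complex_of_real \<theta>)) = 1" using \<open>omega d j = 1\<close> by simp
  then have "cos \<theta> = 1" by (simp add: Re_exp)
  then obtain k :: int where k: "\<theta> = real_of_int k * 2 * pi" using cos_one_2pi_int by blast
  have "real j / real d = \<theta> / (2 * pi)" using pi_gt_zero by (simp add: \<theta>_def)
  also have "\<dots> = real_of_int k" using k pi_gt_zero by (simp add: field_simps)
  finally have "real j / real d = real_of_int k" .
  moreover have "0 < real j / real d" "real j / real d < 1" using assms by auto
  ultimately show False by simp
qed

lemma sum_omega_pow:
  assumes "j < d"
  shows "(\<Sum>b<d. omega d j ^ b) = (if j = 0 then of_nat d else 0)"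
proof (cases "j = 0")
  case False
  then show ?thesis using assms omega_neq_1[of j d] omega_pow_eq_1[of d j] by (simp add: geometric_sum)
qed (simp add: omega_def)

lemma averages_to_proj_Z_op_pow:
  assumes "d > 0"
  shows "averages_to_proj d (unit_vec d 0) {..<d} (\<lambda>b. Z_op d ^\<^sub>m b)"
proof -
  have "Z_op d ^\<^sub>m b *\<^sub>v unit_vec d 0 = unit_vec d 0" for b
  proof (rule eq_vecI)
    fix i assume "i < dim_vec (unit_vec d 0)"
    then have i: "i < d" by simp
    have "(Z_op d ^\<^sub>m b *\<^sub>v unit_vec d 0) $ i = (\<Sum>k<d. (if i = k then omega d k ^ b else 0) * unit_vec d 0 $ k)"
      using i by (subst index_mult_mat_vec_sum) (auto simp: Z_op_pow)
    also have "\<dots> = (\<Sum>k<d. if k = i then unit_vec d 0 $ i else 0)"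
      by (rule sum.cong) (auto simp: omega_def)
    finally show "(Z_op d ^\<^sub>m b *\<^sub>v unit_vec d 0) $ i = unit_vec d 0 $ i" using i by simp
  qed simp
  moreover have "(\<Sum>b<d. (Z_op d ^\<^sub>m b) $$ (i, j)) = of_nat d * proj_vec (unit_vec d 0) $$ (i, j)"
    if "i < d" "j < d" for i j
    using that sum_omega_pow[of j d] by (cases "i = j") (auto simp: Z_op_pow proj_vec_index unit_vec_def)
  moreover have "{..<d} \<noteq> {}" using assms by auto
  ultimately show ?thesis unfolding averages_to_proj_def card_lessThan by simp
qed

lemma kron_list_Z_op_pow:
  "kron_list (\<lambda>b. Z_op d ^\<^sub>m b) bs = pauli_string d (map (\<lambda>b. (0, b)) bs)"
proof (induction bs)
  case (Cons b bs)
  have "X_op d ^\<^sub>m 0 * Z_op d ^\<^sub>m b = Z_op d ^\<^sub>m b"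
    using left_mult_one_mat[OF pow_carrier_mat[OF Z_op_carrier]] by simp
  then show ?case using Cons by simp
qed simp

definition cinner :: "complex vec \<Rightarrow> complex vec \<Rightarrow> complex" where
  "cinner u v = (\<Sum>i<dim_vec u. cnj (u $ i) * v $ i)"

definition qform :: "complex mat \<Rightarrow> complex vec \<Rightarrow> complex" where
  "qform A v = (\<Sum>i<dim_vec v. \<Sum>k<dim_vec v. cnj (v $ i) * A $$ (i, k) * v $ k)"

definition mixture :: "nat \<Rightarrow> 'j set \<Rightarrow> ('j \<Rightarrow> real) \<Rightarrow> ('j \<Rightarrow> complex vec) \<Rightarrow> complex mat" where
  "mixture N J w u = mat N N (\<lambda>(i, l). \<Sum>j\<in>J. of_real (w j) * proj_vec (u j) $$ (i, l))"

lemma cnj_cinner: "dim_vec u = dim_vec v \<Longrightarrow> cnj (cinner u v) = cinner v u"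
  unfolding cinner_def by (simp add: mult.commute)

lemma cinner_mult_vec_qform:
  assumes "A \<in> carrier_mat N N" "v \<in> carrier_vec N"
  shows "cinner v (A *\<^sub>v v) = qform A v"
  using assms unfolding cinner_def qform_def
  by (auto simp del: index_mult_mat_vec simp: index_mult_mat_vec_sum sum_distrib_left mult.assoc
      intro!: sum.cong)

lemma psd_iff_qform:
  "psd N A \<longleftrightarrow> A \<in> carrier_mat N N \<and> (\<forall>v\<in>carrier_vec N. Im (qform A v) = 0 \<and> Re (qform A v) \<ge> 0)"
proof -
  have "(\<Sum>i<N. cnj (v $ i) * (A *\<^sub>v v) $ i) = qform A v"
    if "A \<in> carrier_mat N N" "v \<in> carrier_vec N" for v
    using cinner_mult_vec_qform[OF that] that by (simp add: cinner_def)
  then show ?thesis unfolding psd_def Let_def by (metis (no_types, lifting))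
qed

lemma cinner_mult_vec_adj:
  assumes A: "A \<in> carrier_mat N N" and u: "u \<in> carrier_vec N" and v: "v \<in> carrier_vec N"
  shows "cinner (A *\<^sub>v u) v = cinner u (adj A *\<^sub>v v)"
proof -
  have "cinner (A *\<^sub>v u) v = (\<Sum>i<N. \<Sum>k<N. cnj (A $$ (i, k)) * cnj (u $ k) * v $ i)"
    using assms unfolding cinner_def
    by (auto simp del: index_mult_mat_vec simp: index_mult_mat_vec_sum sum_distrib_right intro!: sum.cong)
  also have "\<dots> = (\<Sum>k<N. \<Sum>i<N. cnj (A $$ (i, k)) * cnj (u $ k) * v $ i)"
    by (rule sum.swap)
  also have "\<dots> = cinner u (adj A *\<^sub>v v)"
    using assms unfolding cinner_def
    by (auto simp del: index_mult_mat_vec simp: index_mult_mat_vec_sum sum_distrib_left mult_ac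
        intro!: sum.cong)
  finally show ?thesis .
qed

lemma cinner_unitary_fix:
  assumes "unitary N g" "\<Psi> \<in> carrier_vec N" "g *\<^sub>v \<Psi> = \<Psi>" "u \<in> carrier_vec N"
  shows "cinner (g *\<^sub>v u) \<Psi> = cinner u \<Psi>"
  using cinner_mult_vec_adj[OF unitary_carrier[OF assms(1)] assms(4,2)] unitary_fix_adj[OF assms(1-3)]
  by simp

lemma cinner_unitary:
  assumes U: "unitary N U" and u: "u \<in> carrier_vec N"
  shows "cinner (U *\<^sub>v u) (U *\<^sub>v u) = cinner u u"
proof -
  have Uc: "U \<in> carrier_mat N N" using U by (rule unitary_carrier)
  have "cinner (U *\<^sub>v u) (U *\<^sub>v u) = cinner u (adj U *\<^sub>v (U *\<^sub>v u))"
    using Uc u by (intro cinner_mult_vec_adj) auto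
  then show ?thesis using unitary_adj_mult_vec[OF U u] by simp
qed

lemma cinner_unit_vec_left:
  assumes "w \<in> carrier_vec N" "i < N"
  shows "cinner (unit_vec N i) w = w $ i"
proof -
  have "cinner (unit_vec N i) w = (\<Sum>k<N. if k = i then w $ k else 0)"
    unfolding cinner_def using assms by (intro sum.cong) auto
  then show ?thesis using assms by simp
qed

lemma cinner_unit_vec_right:
  assumes "\<Psi> \<in> carrier_vec N" "i < N"
  shows "cinner \<Psi> (unit_vec N i) = cnj (\<Psi> $ i)"
  using cinner_unit_vec_left[OF assms] cnj_cinner[of "unit_vec N i" \<Psi>] assms
  by (metis carrier_vecD complex_cnj_cnj index_unit_vec(3))

lemma cinner_unit_vec_0: "N > 0 \<Longrightarrow> cinner (unit_vec N 0) (unit_vec N 0) = 1"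
  using cinner_unit_vec_right[of "unit_vec N 0" N 0] by simp

lemma cinner_self: "\<Psi> \<in> carrier_vec N \<Longrightarrow> cinner \<Psi> \<Psi> = of_real (\<Sum>i<N. (cmod (\<Psi> $ i))\<^sup>2)"
proof -
  assume "\<Psi> \<in> carrier_vec N"
  moreover have "cnj (\<Psi> $ i) * \<Psi> $ i = of_real ((cmod (\<Psi> $ i))\<^sup>2)" for i
    by (simp only: complex_norm_square mult.commute)
  ultimately show ?thesis unfolding cinner_def by simp
qed

lemma cinner_vec_kron:
  assumes "dim_vec u = dim_vec u'" "dim_vec v = dim_vec v'"
  shows "cinner (vec_kron u v) (vec_kron u' v') = cinner u u' * cinner v v'"
proof -
  have "cinner (vec_kron u v) (vec_kron u' v') =
      (\<Sum>a<dim_vec u. \<Sum>b<dim_vec v. cnj (vec_kron u v $ (a * dim_vec v + b)) * vec_kron u' v' $ (a * dim_vec v + b))"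
    unfolding cinner_def by (simp add: sum_lessThan_mult_split)
  also have "\<dots> = (\<Sum>a<dim_vec u. \<Sum>b<dim_vec v. (cnj (u $ a) * u' $ a) * (cnj (v $ b) * v' $ b))"
  proof (intro sum.cong refl)
    fix a b assume "a \<in> {..<dim_vec u}" and b: "b \<in> {..<dim_vec v}"
    then have k: "a * dim_vec v + b < dim_vec u * dim_vec v" "a * dim_vec v' + b < dim_vec u' * dim_vec v'"
      using assms by (simp_all add: mult_index_lt)
    have digits: "(a * n + b) div n = a" "(a * n + b) mod n = b" if "b < n" for n :: nat
      using that by auto
    show "cnj (vec_kron u v $ (a * dim_vec v + b)) * vec_kron u' v' $ (a * dim_vec v + b) =
        (cnj (u $ a) * u' $ a) * (cnj (v $ b) * v' $ b)"
      using vec_kron_index[OF k(1)] vec_kron_index[OF k(2)] digits[of "dim_vec v"] b assms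
      by (simp add: mult_ac)
  qed
  also have "\<dots> = cinner u u' * cinner v v'" unfolding cinner_def by (simp add: sum_product)
  finally show ?thesis .
qed

lemma cinner_vec_kron_pow: "cinner v v = 1 \<Longrightarrow> cinner (vec_kron_pow v n) (vec_kron_pow v n) = 1"
  by (induction n) (simp_all add: cinner_vec_kron, simp add: cinner_def)

lemma qform_unit_vec:
  assumes "A \<in> carrier_mat N N" "i < N"
  shows "qform A (unit_vec N i) = A $$ (i, i)"
  using cinner_mult_vec_qform[OF assms(1), of "unit_vec N i"] cinner_unit_vec_left[of _ N i]
    index_mult_unit_vec[OF assms(1) assms(2) assms(2)] assms
  by simp

lemma qform_lincomb:
  "v \<in> carrier_vec N \<Longrightarrow>
   qform (mat N N (\<lambda>(i, l). a * A $$ (i, l) + b * B $$ (i, l))) v = a * qform A v + b * qform B v"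
  unfolding qform_def by (auto simp: algebra_simps sum.distrib sum_distrib_left intro!: sum.cong)

lemma tr_lincomb:
  "A \<in> carrier_mat N N \<Longrightarrow> B \<in> carrier_mat N N \<Longrightarrow>
   tr (mat N N (\<lambda>(i, l). a * A $$ (i, l) + b * B $$ (i, l))) = a * tr A + b * tr B"
  unfolding tr_def by (simp add: sum.distrib sum_distrib_left)

lemma mixture_dims [simp]: "dim_row (mixture N J w u) = N" "dim_col (mixture N J w u) = N"
  by (auto simp: mixture_def)

lemma mixture_carrier [simp]: "mixture N J w u \<in> carrier_mat N N"
  by (simp add: mixture_def)

lemma mixture_index:
  "i < N \<Longrightarrow> l < N \<Longrightarrow> mixture N J w u $$ (i, l) = (\<Sum>j\<in>J. of_real (w j) * proj_vec (u j) $$ (i, l))"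
  by (simp add: mixture_def)

lemma mixture_mult_vec:
  assumes u: "\<forall>j\<in>J. u j \<in> carrier_vec N" and v: "v \<in> carrier_vec N"
  shows "mixture N J w u *\<^sub>v v = vec N (\<lambda>i. \<Sum>j\<in>J. of_real (w j) * cinner (u j) v * u j $ i)"
proof (rule eq_vecI)
  fix i assume "i < dim_vec (vec N (\<lambda>i. \<Sum>j\<in>J. of_real (w j) * cinner (u j) v * u j $ i))"
  then have i: "i < N" by simp
  have "(mixture N J w u *\<^sub>v v) $ i = (\<Sum>l<N. (\<Sum>j\<in>J. of_real (w j) * proj_vec (u j) $$ (i, l)) * v $ l)"
    using i v by (subst index_mult_mat_vec_sum) (auto simp: mixture_index intro!: sum.cong)
  also have "\<dots> = (\<Sum>l<N. \<Sum>j\<in>J. of_real (w j) * (u j $ i * cnj (u j $ l)) * v $ l)"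
    using i u by (auto simp: sum_distrib_right proj_vec_index intro!: sum.cong)
  also have "\<dots> = (\<Sum>j\<in>J. \<Sum>l<N. of_real (w j) * (u j $ i * cnj (u j $ l)) * v $ l)"
    by (rule sum.swap)
  also have "\<dots> = (\<Sum>j\<in>J. of_real (w j) * cinner (u j) v * u j $ i)"
    using u unfolding cinner_def by (auto simp: sum_distrib_left sum_distrib_right mult_ac intro!: sum.cong)
  finally show "(mixture N J w u *\<^sub>v v) $ i = vec N (\<lambda>i. \<Sum>j\<in>J. of_real (w j) * cinner (u j) v * u j $ i) $ i"
    using i by simp
qed simp

lemma qform_mixture:
  assumes u: "\<forall>j\<in>J. u j \<in> carrier_vec N" and v: "v \<in> carrier_vec N"
  shows "qform (mixture N J w u) v = of_real (\<Sum>j\<in>J. w j * (cmod (cinner (u j) v))\<^sup>2)"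
proof -
  have "qform (mixture N J w u) v = cinner v (mixture N J w u *\<^sub>v v)"
    by (rule cinner_mult_vec_qform[OF mixture_carrier v, symmetric])
  also have "\<dots> = (\<Sum>i<N. \<Sum>j\<in>J. cnj (v $ i) * (of_real (w j) * cinner (u j) v * u j $ i))"
    using v by (simp add: mixture_mult_vec[OF u v] cinner_def[of v] sum_distrib_left)
  also have "\<dots> = (\<Sum>j\<in>J. \<Sum>i<N. cnj (v $ i) * (of_real (w j) * cinner (u j) v * u j $ i))"
    by (rule sum.swap)
  also have "\<dots> = (\<Sum>j\<in>J. of_real (w j) * cinner (u j) v * cinner v (u j))"
    using v by (simp add: cinner_def[of v] sum_distrib_left mult_ac)
  also have "\<dots> = (\<Sum>j\<in>J. of_real (w j * (cmod (cinner (u j) v))\<^sup>2))"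
  proof (intro sum.cong refl)
    fix j assume "j \<in> J"
    then have "cinner v (u j) = cnj (cinner (u j) v)" using u v by (simp add: cnj_cinner)
    then show "of_real (w j) * cinner (u j) v * cinner v (u j) = of_real (w j * (cmod (cinner (u j) v))\<^sup>2)"
      by (simp only: of_real_mult complex_norm_square mult.assoc)
  qed
  finally show ?thesis by simp
qed

lemma mixture_psd:
  "\<forall>j\<in>J. u j \<in> carrier_vec N \<Longrightarrow> \<forall>j\<in>J. w j \<ge> 0 \<Longrightarrow> psd N (mixture N J w u)"
  by (auto simp: psd_iff_qform qform_mixture intro!: sum_nonneg)

lemma tr_mixture:
  assumes "\<forall>j\<in>J. u j \<in> carrier_vec N \<and> cinner (u j) (u j) = 1"
  shows "tr (mixture N J w u) = of_real (\<Sum>j\<in>J. w j)"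
proof -
  have "tr (mixture N J w u) = (\<Sum>i<N. \<Sum>j\<in>J. of_real (w j) * (cnj (u j $ i) * u j $ i))"
    unfolding tr_def using assms by (auto simp: mixture_index proj_vec_index mult_ac intro!: sum.cong)
  also have "\<dots> = (\<Sum>j\<in>J. of_real (w j) * (\<Sum>i<N. cnj (u j $ i) * u j $ i))"
    by (simp add: sum.swap[of _ J] sum_distrib_left mult_ac)
  also have "\<dots> = (\<Sum>j\<in>J. of_real (w j))"
    using assms unfolding cinner_def by (auto intro!: sum.cong)
  finally show ?thesis by simp
qed

lemma adj_mixture:
  assumes "\<forall>j\<in>J. u j \<in> carrier_vec N"
  shows "adj (mixture N J w u) = mixture N J w u"
proof (rule eq_matI)
  fix i l assume "i < dim_row (mixture N J w u)" "l < dim_col (mixture N J w u)"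
  then show "adj (mixture N J w u) $$ (i, l) = mixture N J w u $$ (i, l)"
    using assms by (auto simp: mixture_index proj_vec_index mult.commute intro!: sum.cong)
qed auto

lemma proj_vec_eq_mixture: "\<Psi> \<in> carrier_vec N \<Longrightarrow> proj_vec \<Psi> = mixture N {()} (\<lambda>_. 1) (\<lambda>_. \<Psi>)"
  by (intro eq_matI) (auto simp: mixture_index)

lemma qform_proj_vec:
  "\<Psi> \<in> carrier_vec N \<Longrightarrow> v \<in> carrier_vec N \<Longrightarrow> qform (proj_vec \<Psi>) v = of_real ((cmod (cinner \<Psi> v))\<^sup>2)"
  by (simp add: proj_vec_eq_mixture qform_mixture)

lemma tr_proj_vec: "\<Psi> \<in> carrier_vec N \<Longrightarrow> cinner \<Psi> \<Psi> = 1 \<Longrightarrow> tr (proj_vec \<Psi>) = 1"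
  by (simp add: proj_vec_eq_mixture tr_mixture)

lemma tr_proj_vec_mult:
  assumes \<Psi>: "\<Psi> \<in> carrier_vec N" and S: "S \<in> carrier_mat N N"
  shows "tr (proj_vec \<Psi> * S) = qform S \<Psi>"
proof -
  have "tr (proj_vec \<Psi> * S) = (\<Sum>i<N. \<Sum>k<N. \<Psi> $ i * cnj (\<Psi> $ k) * S $$ (k, i))"
    unfolding tr_def using \<Psi> S by (auto simp: index_mult_mat_sum proj_vec_index simp del: index_mult_mat(1)
                                    intro!: sum.cong)
  also have "\<dots> = (\<Sum>k<N. \<Sum>i<N. \<Psi> $ i * cnj (\<Psi> $ k) * S $$ (k, i))" by (rule sum.swap)
  also have "\<dots> = qform S \<Psi>" unfolding qform_def using \<Psi> by (auto simp: mult_ac intro!: sum.cong)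
  finally show ?thesis .
qed

lemma proj_vec_idem:
  assumes "\<Psi> \<in> carrier_vec N" "cinner \<Psi> \<Psi> = 1"
  shows "proj_vec \<Psi> * proj_vec \<Psi> = proj_vec \<Psi>"
proof (rule eq_matI)
  fix i j assume "i < dim_row (proj_vec \<Psi>)" "j < dim_col (proj_vec \<Psi>)"
  then have i: "i < N" and j: "j < N" using assms by auto
  have "(proj_vec \<Psi> * proj_vec \<Psi>) $$ (i, j) = (\<Sum>k<N. \<Psi> $ i * cnj (\<Psi> $ k) * (\<Psi> $ k * cnj (\<Psi> $ j)))"
    using i j assms by (subst index_mult_mat_sum) (auto simp: proj_vec_index)
  also have "\<dots> = \<Psi> $ i * cnj (\<Psi> $ j) * (\<Sum>k<N. cnj (\<Psi> $ k) * \<Psi> $ k)"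
    by (simp add: sum_distrib_left mult_ac)
  also have "\<dots> = \<Psi> $ i * cnj (\<Psi> $ j) * cinner \<Psi> \<Psi>"
    using assms unfolding cinner_def by simp
  finally show "(proj_vec \<Psi> * proj_vec \<Psi>) $$ (i, j) = proj_vec \<Psi> $$ (i, j)"
    using assms i j by (simp add: proj_vec_index)
qed auto

lemma idempotent_range_mult:
  fixes P Q :: "complex mat"
  assumes P: "P \<in> carrier_mat N N" and Q: "Q \<in> carrier_mat N N" and PP: "P * P = P"
    and range: "{Q *\<^sub>v x | x. x \<in> carrier_vec N} \<subseteq> {P *\<^sub>v x | x. x \<in> carrier_vec N}"
  shows "P * Q = Q"
proof (rule mat_eqI_mult_vec[OF mult_carrier_mat[OF P Q] Q])
  fix x :: "complex vec" assume x: "x \<in> carrier_vec N"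
  then obtain y where y: "y \<in> carrier_vec N" "Q *\<^sub>v x = P *\<^sub>v y" using range by blast
  have "(P * Q) *\<^sub>v x = P *\<^sub>v (P *\<^sub>v y)" using P Q x y by simp
  also have "\<dots> = Q *\<^sub>v x" using P PP y by (simp flip: assoc_mult_mat_vec)
  finally show "(P * Q) *\<^sub>v x = Q *\<^sub>v x" .
qed

lemma supp_proj_proj_vec:
  assumes \<Psi>: "\<Psi> \<in> carrier_vec N" "cinner \<Psi> \<Psi> = 1"
  shows "supp_proj N (proj_vec \<Psi>) = proj_vec \<Psi>"
  unfolding supp_proj_def
proof (rule the_equality)
  let ?r = "proj_vec \<Psi>"
  have r: "?r \<in> carrier_mat N N" using \<Psi> by auto
  show "?r \<in> carrier_mat N N \<and> adj ?r = ?r \<and> ?r * ?r = ?r \<and>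
      {?r *\<^sub>v x | x. x \<in> carrier_vec N} = {?r *\<^sub>v x | x. x \<in> carrier_vec N}"
    using r proj_vec_idem[OF \<Psi>] by simp
  fix P assume "P \<in> carrier_mat N N \<and> adj P = P \<and> P * P = P \<and>
      {P *\<^sub>v x | x. x \<in> carrier_vec N} = {?r *\<^sub>v x | x. x \<in> carrier_vec N}"
  then have P: "P \<in> carrier_mat N N" and aP: "adj P = P" and PP: "P * P = P"
    and range: "{P *\<^sub>v x | x. x \<in> carrier_vec N} = {?r *\<^sub>v x | x. x \<in> carrier_vec N}" by auto
  have "P * ?r = ?r" using range by (intro idempotent_range_mult[OF P r PP]) auto
  moreover have "?r * P = P" using range by (intro idempotent_range_mult[OF r P proj_vec_idem[OF \<Psi>]]) auto
  then have "P = adj P * adj ?r" using aP P r by (metis adj_mult carrier_matD(1,2) proj_vec_dims)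
  ultimately show "P = ?r" using aP by simp
qed

lemma stab_vecs_unit:
  assumes d: "d > 0" and u: "u \<in> stab_vecs d m"
  shows "u \<in> carrier_vec (d ^ m)" "cinner u u = 1"
proof -
  obtain C where C: "C \<in> clifford d m" and u: "u = C *\<^sub>v unit_vec (d ^ m) 0"
    using u unfolding stab_vecs_def by blast
  have U: "unitary (d ^ m) C" using C by (simp add: clifford_def)
  then have "C \<in> carrier_mat (d ^ m) (d ^ m)" by (rule unitary_carrier)
  then show "u \<in> carrier_vec (d ^ m)" using u by simp
  show "cinner u u = 1" using u cinner_unitary[OF U] cinner_unit_vec_0[of "d ^ m"] d by simp
qed

lemma mixture_in_F_STAB:
  assumes J: "finite J" and wu: "\<forall>j\<in>J. w j \<ge> 0 \<and> u j \<in> stab_vecs d m" and w: "sum w J = 1"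
  shows "mixture (d ^ m) J w u \<in> F_STAB d m"
proof -
  obtain f where f: "bij_betw f {..<card J} J"
    using ex_bij_betw_nat_finite[OF J] by (auto simp: atLeast0LessThan)
  have reindex: "(\<Sum>j\<in>J. h j) = (\<Sum>k<card J. h (f k))" for h :: "_ \<Rightarrow> 'b::comm_monoid_add"
    by (rule sum.reindex_bij_betw[OF f, symmetric])
  have "\<forall>k<card J. w (f k) \<ge> 0 \<and> u (f k) \<in> stab_vecs d m"
    using wu f by (auto simp: bij_betw_def)
  moreover have "(\<Sum>k<card J. w (f k)) = 1" using w by (simp add: reindex)
  moreover have "mixture (d ^ m) J w u =
      mat (d ^ m) (d ^ m) (\<lambda>(i, j). \<Sum>k<card J. of_real (w (f k)) * proj_vec (u (f k)) $$ (i, j))"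
    unfolding mixture_def reindex ..
  ultimately show ?thesis unfolding F_STAB_def mem_Collect_eq
    by (intro exI[of _ "card J"] exI[of _ "\<lambda>k. w (f k)"] exI[of _ "\<lambda>k. u (f k)"]) auto
qed

lemma F_STAB_obtain_mixture:
  assumes "\<sigma> \<in> F_STAB d m"
  obtains K :: nat and p :: "nat \<Rightarrow> real" and vs where "\<forall>k<K. p k \<ge> 0 \<and> vs k \<in> stab_vecs d m" "(\<Sum>k<K. p k) = 1"
    "\<sigma> = mixture (d ^ m) {..<K} p vs"
proof -
  obtain K :: nat and p :: "nat \<Rightarrow> real" and vs where "\<forall>k<K. p k \<ge> 0 \<and> vs k \<in> stab_vecs d m" "(\<Sum>k<K. p k) = 1"
    "\<sigma> = mat (d ^ m) (d ^ m) (\<lambda>(i, j). \<Sum>k<K. of_real (p k) * proj_vec (vs k) $$ (i, j))"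
    using assms unfolding F_STAB_def by blast
  then show thesis using that[of K p vs] unfolding mixture_def by simp
qed

section \<open>Min- and max-relative entropies of a pure state\<close>

lemma Re_tr_supp_proj_proj_vec_mult:
  assumes "\<Psi> \<in> carrier_vec N" "cinner \<Psi> \<Psi> = 1" "\<sigma> \<in> carrier_mat N N"
  shows "Re (tr (supp_proj N (proj_vec \<Psi>) * \<sigma>)) = Re (qform \<sigma> \<Psi>)"
  using assms by (simp add: supp_proj_proj_vec tr_proj_vec_mult)

lemma D_min_le_D_max_proj_vec:
  assumes \<Psi>: "\<Psi> \<in> carrier_vec N" "cinner \<Psi> \<Psi> = 1"
  shows "D_min N F (proj_vec \<Psi>) \<le> D_max N F (proj_vec \<Psi>)"
  unfolding D_max_def
proof (rule INF_greatest)
  let ?\<rho> = "proj_vec \<Psi>"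
  fix s assume "s \<in> {s. s \<ge> 0 \<and> (\<exists>\<tau>. is_state N \<tau> \<and> complex_of_real (1 / (1 + s)) \<cdot>\<^sub>m (?\<rho> + of_real s \<cdot>\<^sub>m \<tau>) \<in> F)}"
  then obtain \<tau> where s: "s \<ge> 0" and \<tau>: "psd N \<tau>"
    and \<sigma>F: "complex_of_real (1 / (1 + s)) \<cdot>\<^sub>m (?\<rho> + of_real s \<cdot>\<^sub>m \<tau>) \<in> F"
    by (auto simp: is_state_def)
  define \<sigma> where "\<sigma> = complex_of_real (1 / (1 + s)) \<cdot>\<^sub>m (?\<rho> + of_real s \<cdot>\<^sub>m \<tau>)"
  have \<rho>c: "?\<rho> \<in> carrier_mat N N" and \<tau>c: "\<tau> \<in> carrier_mat N N"
    using \<Psi> \<tau> by (auto simp: psd_iff_qform)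
  have \<sigma>_lincomb: "\<sigma> = mat N N (\<lambda>(i, l). of_real (1 / (1 + s)) * ?\<rho> $$ (i, l) + of_real (s / (1 + s)) * \<tau> $$ (i, l))"
    unfolding \<sigma>_def by (rule eq_matI) (use \<rho>c \<tau>c in \<open>auto simp: algebra_simps\<close>)
  define q where "q = Re (tr (supp_proj N ?\<rho> * \<sigma>))"
  have "q = Re (qform \<sigma> \<Psi>)"
    unfolding q_def using \<Psi> \<rho>c \<tau>c by (intro Re_tr_supp_proj_proj_vec_mult) (auto simp: \<sigma>_def)
  also have "\<dots> = 1 / (1 + s) + s / (1 + s) * Re (qform \<tau> \<Psi>)"
    unfolding \<sigma>_lincomb qform_lincomb[OF \<Psi>(1)] using \<Psi> by (simp add: qform_proj_vec)
  finally have "q \<ge> 1 / (1 + s)"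
    using s \<tau> \<Psi>(1) by (simp add: psd_iff_qform)
  moreover have "1 / (1 + s) > 0" using s by simp
  ultimately have "q > 0" by linarith
  have "- log 2 (1 + s) = log 2 (1 / (1 + s))" using s by (simp add: log_divide)
  also have "\<dots> \<le> log 2 q" using \<open>q \<ge> 1 / (1 + s)\<close> \<open>1 / (1 + s) > 0\<close> \<open>q > 0\<close> by simp
  finally have log_le: "- log 2 q \<le> log 2 (1 + s)" by simp
  have "D_min N F ?\<rho> \<le> (if q > 0 then ereal (- log 2 q) else \<infinity>)"
    using \<sigma>F unfolding D_min_def q_def \<sigma>_def Let_def by (rule INF_lower)
  also have "\<dots> \<le> ereal (log 2 (1 + s))" using \<open>q > 0\<close> log_le by simp
  finally show "D_min N F ?\<rho> \<le> ereal (log 2 (1 + s))" .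
qed

lemma dominated_weight_le_1:
  assumes \<Psi>: "\<Psi> \<in> carrier_vec N" "cinner \<Psi> \<Psi> = 1"
    and S: "S \<in> carrier_mat N N" "tr S = 1"
    and dom: "\<forall>v\<in>carrier_vec N. q * (cmod (cinner \<Psi> v))\<^sup>2 \<le> Re (qform S v)"
  shows "q \<le> 1"
proof -
  have "complex_of_real (\<Sum>i<N. (cmod (\<Psi> $ i))\<^sup>2) = 1" using cinner_self[OF \<Psi>(1)] \<Psi>(2) by simp
  then have "(\<Sum>i<N. (cmod (\<Psi> $ i))\<^sup>2) = 1" by (simp only: of_real_eq_1_iff)
  then have "q = (\<Sum>i<N. q * (cmod (\<Psi> $ i))\<^sup>2)" by (simp add: sum_distrib_left[symmetric])
  also have "\<dots> = (\<Sum>i<N. q * (cmod (cinner \<Psi> (unit_vec N i)))\<^sup>2)"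
    using \<Psi> by (simp add: cinner_unit_vec_right)
  also have "\<dots> \<le> (\<Sum>i<N. Re (qform S (unit_vec N i)))"
    using dom by (intro sum_mono) simp
  also have "\<dots> = Re (tr S)"
    using S(1) by (simp add: tr_def qform_unit_vec Re_sum)
  finally show ?thesis using S by simp
qed

lemma smult_add_smult_residual:
  assumes S: "S \<in> carrier_mat N N" and R: "R \<in> carrier_mat N N" and s: "s > 0"
  shows "complex_of_real (1 / (1 + s)) \<cdot>\<^sub>m (R + of_real s \<cdot>\<^sub>m
      mat N N (\<lambda>(i, l). of_real ((1 + s) / s) * S $$ (i, l) + of_real (- 1 / s) * R $$ (i, l))) = S"
proof (rule eq_matI)
  have inv: "complex_of_real s * complex_of_real ((1 + s) / s) = complex_of_real (1 + s)"
    "complex_of_real s * complex_of_real (- 1 / s) = - 1"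
    "complex_of_real (1 / (1 + s)) * complex_of_real (1 + s) = 1"
    using s by (simp_all only: of_real_mult[symmetric]) simp_all
  have "complex_of_real (1 / (1 + s)) * (r + complex_of_real s *
      (complex_of_real ((1 + s) / s) * x + complex_of_real (- 1 / s) * r)) = x" for r x
  proof -
    have "r + complex_of_real s * (complex_of_real ((1 + s) / s) * x + complex_of_real (- 1 / s) * r)
        = r + (complex_of_real s * complex_of_real ((1 + s) / s)) * x
            + (complex_of_real s * complex_of_real (- 1 / s)) * r"
      by (simp add: algebra_simps)
    also have "\<dots> = complex_of_real (1 + s) * x" unfolding inv by simp
    finally show ?thesis using inv(3) by (simp add: mult.assoc[symmetric])
  qed
  moreover fix i l assume "i < dim_row S" "l < dim_col S"
  ultimately show "(complex_of_real (1 / (1 + s)) \<cdot>\<^sub>m (R + of_real s \<cdot>\<^sub>m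
      mat N N (\<lambda>(i, l). of_real ((1 + s) / s) * S $$ (i, l) + of_real (- 1 / s) * R $$ (i, l)))) $$ (i, l)
      = S $$ (i, l)"
    using S R by simp
qed (use S R in auto)

lemma D_max_le_log_of_dominating:
  assumes \<Psi>: "\<Psi> \<in> carrier_vec N" "cinner \<Psi> \<Psi> = 1"
    and S: "S \<in> F" "psd N S" "tr S = 1"
    and dom: "\<forall>v\<in>carrier_vec N. q * (cmod (cinner \<Psi> v))\<^sup>2 \<le> Re (qform S v)"
    and s: "s > 0" "(1 + s) * q \<ge> 1"
  shows "D_max N F (proj_vec \<Psi>) \<le> ereal (log 2 (1 + s))"
proof -
  let ?\<rho> = "proj_vec \<Psi>"
  have \<rho>c: "?\<rho> \<in> carrier_mat N N" and Sc: "S \<in> carrier_mat N N"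
    using \<Psi> S by (auto simp: psd_iff_qform)
  define \<tau> where "\<tau> = mat N N (\<lambda>(i, l). of_real ((1 + s) / s) * S $$ (i, l) + of_real (- 1 / s) * ?\<rho> $$ (i, l))"
  have "psd N \<tau>"
    unfolding psd_iff_qform
  proof (intro conjI ballI)
    fix v :: "complex vec" assume v: "v \<in> carrier_vec N"
    let ?a = "(cmod (cinner \<Psi> v))\<^sup>2"
    have "qform \<tau> v = of_real ((1 + s) / s) * qform S v + of_real (- 1 / s) * of_real ?a"
      unfolding \<tau>_def qform_lincomb[OF v] using \<Psi> v by (simp add: qform_proj_vec)
    moreover have "Im (qform S v) = 0" "(1 + s) * Re (qform S v) - ?a \<ge> 0"
    proof -
      show "Im (qform S v) = 0" using S v by (simp add: psd_iff_qform)
      have "?a \<le> ((1 + s) * q) * ?a" using s by (simp add: mult_le_cancel_right1)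
      also have "\<dots> \<le> (1 + s) * Re (qform S v)" using dom v s by (simp add: mult.assoc)
      finally show "(1 + s) * Re (qform S v) - ?a \<ge> 0" by simp
    qed
    ultimately show "Im (qform \<tau> v) = 0" "Re (qform \<tau> v) \<ge> 0"
      using s by (simp_all add: diff_divide_distrib[symmetric] add_divide_distrib[symmetric])
  qed (simp add: \<tau>_def)
  moreover have "tr \<tau> = 1"
    unfolding \<tau>_def tr_lincomb[OF Sc \<rho>c] using S \<Psi> s by (simp add: tr_proj_vec field_simps)
  moreover have "complex_of_real (1 / (1 + s)) \<cdot>\<^sub>m (?\<rho> + of_real s \<cdot>\<^sub>m \<tau>) = S"
    unfolding \<tau>_def by (rule smult_add_smult_residual[OF Sc \<rho>c s(1)])
  ultimately have "s \<in> {s. s \<ge> 0 \<and> (\<exists>\<tau>. is_state N \<tau> \<and> complex_of_real (1 / (1 + s)) \<cdot>\<^sub>m (?\<rho> + of_real s \<cdot>\<^sub>m \<tau>) \<in> F)}"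
    using s S by (auto simp: is_state_def)
  then show ?thesis unfolding D_max_def by (rule INF_lower)
qed

lemma D_max_le_neg_log_of_dominating:
  assumes \<Psi>: "\<Psi> \<in> carrier_vec N" "cinner \<Psi> \<Psi> = 1"
    and S: "S \<in> F" "psd N S" "tr S = 1"
    and dom: "\<forall>v\<in>carrier_vec N. q * (cmod (cinner \<Psi> v))\<^sup>2 \<le> Re (qform S v)"
    and q: "q > 0"
  shows "D_max N F (proj_vec \<Psi>) \<le> ereal (- log 2 q)"
proof (rule ereal_le_epsilon2)
  fix e :: real assume e: "e > 0"
  have "q \<le> 1"
    using S by (intro dominated_weight_le_1[OF \<Psi> _ _ dom]) (auto simp: psd_iff_qform)
  then have "- log 2 q \<ge> 0" using q by simp
  define s where "s = 2 powr (- log 2 q + e) - 1"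
  have s1: "1 + s = 2 powr (- log 2 q + e)" unfolding s_def by simp
  have "2 powr 0 < 2 powr (- log 2 q + e)"
    using \<open>- log 2 q \<ge> 0\<close> e by (intro powr_less_mono) auto
  then have "s > 0" using s1 by simp
  moreover have "(1 + s) * q \<ge> 1"
  proof -
    have "2 powr (- log 2 q) \<le> 1 + s" unfolding s1 using e by simp
    moreover have "2 powr (- log 2 q) = 1 / q" using q by (simp add: powr_minus_divide)
    ultimately show ?thesis using q by (simp add: field_simps)
  qed
  ultimately have "D_max N F (proj_vec \<Psi>) \<le> ereal (log 2 (1 + s))"
    by (rule D_max_le_log_of_dominating[OF \<Psi> S dom])
  then show "D_max N F (proj_vec \<Psi>) \<le> ereal (- log 2 q) + ereal e" by (simp add: s1)
qed

section \<open>Twirling a free state by a Clifford average\<close>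

lemma cinner_diff_left:
  "dim_vec u = dim_vec w \<Longrightarrow> dim_vec v = dim_vec w \<Longrightarrow> cinner (u - v) w = cinner u w - cinner v w"
  unfolding cinner_def by (simp add: algebra_simps sum_subtractf)

lemma cinner_diff_right:
  "dim_vec v = dim_vec u \<Longrightarrow> dim_vec w = dim_vec u \<Longrightarrow> cinner u (v - w) = cinner u v - cinner u w"
  unfolding cinner_def by (simp add: algebra_simps sum_subtractf)

lemma cinner_smult_left: "cinner (c \<cdot>\<^sub>v u) v = cnj c * cinner u v"
  unfolding cinner_def by (simp add: sum_distrib_left mult_ac)

lemma cinner_smult_right: "dim_vec v = dim_vec u \<Longrightarrow> cinner u (c \<cdot>\<^sub>v v) = c * cinner u v"
  unfolding cinner_def by (simp add: sum_distrib_left mult_ac)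

text \<open>With \<open>a = \<langle>\<Psi>, v\<rangle>\<close>, the cross terms vanish and
  \<open>qform S v = q |a|\<^sup>2 + qform S (v - a \<Psi>)\<close>.\<close>

lemma qform_ge_of_eigenvector:
  assumes S: "psd N S" "adj S = S" and \<Psi>: "\<Psi> \<in> carrier_vec N" "cinner \<Psi> \<Psi> = 1"
    and eig: "S *\<^sub>v \<Psi> = of_real q \<cdot>\<^sub>v \<Psi>" and v: "v \<in> carrier_vec N"
  shows "q * (cmod (cinner \<Psi> v))\<^sup>2 \<le> Re (qform S v)"
proof -
  have Sc: "S \<in> carrier_mat N N" using S by (simp add: psd_iff_qform)
  define a where "a = cinner \<Psi> v"
  define r where "r = v - a \<cdot>\<^sub>v \<Psi>"
  have r: "r \<in> carrier_vec N" using v \<Psi> by (simp add: r_def)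
  have Sr: "S *\<^sub>v r = S *\<^sub>v v - (a * of_real q) \<cdot>\<^sub>v \<Psi>"
    using Sc v \<Psi> by (simp add: r_def mult_minus_distrib_mat_vec mult_mat_vec eig smult_smult_assoc)
  have "cinner \<Psi> (S *\<^sub>v v) = cinner (S *\<^sub>v \<Psi>) v"
    using cinner_mult_vec_adj[OF Sc \<Psi>(1) v] S by simp
  then have \<Psi>Sv: "cinner \<Psi> (S *\<^sub>v v) = of_real q * a"
    by (simp add: eig cinner_smult_left a_def)
  have v\<Psi>: "cinner v \<Psi> = cnj a" using v \<Psi> by (simp add: a_def cnj_cinner)
  have "qform S r = cinner r (S *\<^sub>v r)" using cinner_mult_vec_qform[OF Sc r] ..
  also have "\<dots> = cinner (v - a \<cdot>\<^sub>v \<Psi>) (S *\<^sub>v v - (a * of_real q) \<cdot>\<^sub>v \<Psi>)"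
    by (subst Sr) (simp only: r_def)
  also have "\<dots> = cinner v (S *\<^sub>v v) - cnj a * cinner \<Psi> (S *\<^sub>v v)
      - (a * of_real q) * cinner v \<Psi> + cnj a * (a * of_real q) * cinner \<Psi> \<Psi>"
    using Sc v \<Psi> by (simp add: cinner_diff_left cinner_diff_right cinner_smult_left cinner_smult_right,
        simp add: algebra_simps)
  also have "\<dots> = qform S v - of_real q * (a * cnj a)"
    using cinner_mult_vec_qform[OF Sc v] \<Psi>Sv v\<Psi> \<Psi>(2) by (simp add: algebra_simps)
  finally have "qform S r = qform S v - of_real (q * (cmod a)\<^sup>2)"
    by (simp only: of_real_mult complex_norm_square)
  moreover have "Re (qform S r) \<ge> 0" using S r by (simp add: psd_iff_qform)
  ultimately show ?thesis by (simp add: a_def)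
qed

lemma sum_mult_vec_of_averages_to_proj:
  assumes avg: "averages_to_proj N \<Psi> I g" and \<Psi>: "\<Psi> \<in> carrier_vec N" and v: "v \<in> carrier_vec N"
    and i: "i < N"
  shows "(\<Sum>x\<in>I. (g x *\<^sub>v v) $ i) = of_nat (card I) * cinner \<Psi> v * \<Psi> $ i"
proof -
  have g: "\<forall>x\<in>I. g x \<in> carrier_mat N N"
    and avg_g: "\<forall>i<N. \<forall>j<N. (\<Sum>x\<in>I. g x $$ (i, j)) = of_nat (card I) * proj_vec \<Psi> $$ (i, j)"
    using avg by (auto simp: averages_to_proj_def)
  have "(\<Sum>x\<in>I. (g x *\<^sub>v v) $ i) = (\<Sum>x\<in>I. \<Sum>l<N. g x $$ (i, l) * v $ l)"
    using g v i by (intro sum.cong refl, subst index_mult_mat_vec_sum) auto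
  also have "\<dots> = (\<Sum>l<N. (\<Sum>x\<in>I. g x $$ (i, l)) * v $ l)"
    by (subst sum.swap) (simp add: sum_distrib_right)
  also have "\<dots> = (\<Sum>l<N. of_nat (card I) * (\<Psi> $ i * cnj (\<Psi> $ l)) * v $ l)"
    using avg_g \<Psi> i by (intro sum.cong refl) (simp add: proj_vec_index)
  also have "\<dots> = of_nat (card I) * cinner \<Psi> v * \<Psi> $ i"
    using \<Psi> by (simp add: cinner_def sum_distrib_left sum_distrib_right mult_ac)
  finally show ?thesis .
qed

lemma twirl_mult_vec:
  fixes p :: "nat \<Rightarrow> real" and vs :: "nat \<Rightarrow> complex vec"
  assumes avg: "averages_to_proj N \<Psi> I g" and U: "\<forall>x\<in>I. unitary N (g x)"
    and \<Psi>: "\<Psi> \<in> carrier_vec N" and vs: "\<forall>k<K. vs k \<in> carrier_vec N"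
  shows "mixture N (I \<times> {..<K}) (\<lambda>(x, k). p k / card I) (\<lambda>(x, k). g x *\<^sub>v vs k) *\<^sub>v \<Psi>
       = of_real (\<Sum>k<K. p k * (cmod (cinner (vs k) \<Psi>))\<^sup>2) \<cdot>\<^sub>v \<Psi>"
proof -
  let ?M = "card I"
  have I: "?M > 0" using avg by (auto simp: averages_to_proj_def card_gt_0_iff)
  have fix\<Psi>: "\<forall>x\<in>I. g x *\<^sub>v \<Psi> = \<Psi>" using avg by (simp add: averages_to_proj_def)
  have gvs: "\<forall>j\<in>I \<times> {..<K}. (\<lambda>(x, k). g x *\<^sub>v vs k) j \<in> carrier_vec N"
    using U vs by (auto intro!: mult_mat_vec_carrier[of _ N N] unitary_carrier)
  have "(\<Sum>j\<in>I \<times> {..<K}. of_real ((\<lambda>(x, k). p k / ?M) j) * cinner ((\<lambda>(x, k). g x *\<^sub>v vs k) j) \<Psi> *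
          (\<lambda>(x, k). g x *\<^sub>v vs k) j $ i)
      = of_real (\<Sum>k<K. p k * (cmod (cinner (vs k) \<Psi>))\<^sup>2) * \<Psi> $ i" if i: "i < N" for i
  proof -
    have "(\<Sum>j\<in>I \<times> {..<K}. of_real ((\<lambda>(x, k). p k / ?M) j) * cinner ((\<lambda>(x, k). g x *\<^sub>v vs k) j) \<Psi> *
          (\<lambda>(x, k). g x *\<^sub>v vs k) j $ i)
        = (\<Sum>x\<in>I. \<Sum>k<K. of_real (p k / ?M) * cinner (g x *\<^sub>v vs k) \<Psi> * (g x *\<^sub>v vs k) $ i)"
      by (simp add: sum.cartesian_product split_beta)
    also have "\<dots> = (\<Sum>x\<in>I. \<Sum>k<K. of_real (p k / ?M) * cinner (vs k) \<Psi> * (g x *\<^sub>v vs k) $ i)"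
      using U fix\<Psi> \<Psi> vs by (intro sum.cong refl) (simp add: cinner_unitary_fix[of N])
    also have "\<dots> = (\<Sum>k<K. of_real (p k / ?M) * cinner (vs k) \<Psi> * (\<Sum>x\<in>I. (g x *\<^sub>v vs k) $ i))"
      by (subst sum.swap) (simp add: sum_distrib_left)
    also have "\<dots> = (\<Sum>k<K. of_real (p k / ?M) * cinner (vs k) \<Psi> * (of_nat ?M * cinner \<Psi> (vs k) * \<Psi> $ i))"
      using vs by (intro sum.cong refl) (simp add: sum_mult_vec_of_averages_to_proj[OF avg \<Psi> _ i])
    also have "\<dots> = (\<Sum>k<K. of_real (p k * (cmod (cinner (vs k) \<Psi>))\<^sup>2) * \<Psi> $ i)"
    proof (intro sum.cong refl)
      fix k assume "k \<in> {..<K}"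
      then have c: "cinner \<Psi> (vs k) = cnj (cinner (vs k) \<Psi>)" using vs \<Psi> by (simp add: cnj_cinner)
      have sq: "of_real (p k * (cmod (cinner (vs k) \<Psi>))\<^sup>2) = of_real (p k) * (cinner (vs k) \<Psi> * cnj (cinner (vs k) \<Psi>))"
        by (simp only: of_real_mult complex_norm_square)
      have "(of_nat ?M :: complex) \<noteq> 0" using I by simp
      then show "of_real (p k / ?M) * cinner (vs k) \<Psi> * (of_nat ?M * cinner \<Psi> (vs k) * \<Psi> $ i)
          = of_real (p k * (cmod (cinner (vs k) \<Psi>))\<^sup>2) * \<Psi> $ i"
        unfolding c sq by (simp add: of_real_divide field_simps)
    qed
    finally show ?thesis by (simp add: sum_distrib_right)
  qed
  then show ?thesis unfolding mixture_mult_vec[OF gvs \<Psi>] using \<Psi> by (intro eq_vecI) auto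
qed

lemma clifford_twirl:
  fixes p :: "nat \<Rightarrow> real"
  assumes d: "d > 0" and \<Psi>: "\<Psi> \<in> carrier_vec (d ^ m)"
    and avg: "averages_to_proj (d ^ m) \<Psi> I g" and cliff: "\<forall>x\<in>I. g x \<in> clifford d m"
    and pvs: "\<forall>k<K. p k \<ge> 0 \<and> vs k \<in> stab_vecs d m" "(\<Sum>k<K. p k) = 1"
  obtains S where "S \<in> F_STAB d m" "psd (d ^ m) S" "adj S = S" "tr S = 1"
    "S *\<^sub>v \<Psi> = of_real (\<Sum>k<K. p k * (cmod (cinner (vs k) \<Psi>))\<^sup>2) \<cdot>\<^sub>v \<Psi>"
proof
  let ?J = "I \<times> {..<K}" and ?w = "\<lambda>(x, k). p k / card I" and ?u = "\<lambda>(x, k). g x *\<^sub>v vs k"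
  let ?S = "mixture (d ^ m) ?J ?w ?u"
  have I: "finite I" "I \<noteq> {}" using avg by (auto simp: averages_to_proj_def)
  have U: "\<forall>x\<in>I. unitary (d ^ m) (g x)" using cliff by (simp add: clifford_def)
  have u: "\<forall>j\<in>?J. ?u j \<in> stab_vecs d m" using cliff pvs by (auto intro: stab_vecs_clifford_closed)
  have u_unit: "\<forall>j\<in>?J. ?u j \<in> carrier_vec (d ^ m) \<and> cinner (?u j) (?u j) = 1"
  proof
    fix j assume "j \<in> ?J"
    then have "?u j \<in> stab_vecs d m" using u by blast
    then show "?u j \<in> carrier_vec (d ^ m) \<and> cinner (?u j) (?u j) = 1" using stab_vecs_unit[OF d] by blast
  qed
  have w: "\<forall>j\<in>?J. ?w j \<ge> 0" using pvs by auto
  have "sum ?w ?J = (\<Sum>x\<in>I. (\<Sum>k<K. p k) / card I)"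
    by (simp add: sum.cartesian_product[symmetric] sum_divide_distrib)
  then have w1: "sum ?w ?J = 1" using I pvs by simp
  show "?S \<in> F_STAB d m" using I u w w1 by (intro mixture_in_F_STAB) auto
  show "psd (d ^ m) ?S" using u_unit w by (intro mixture_psd) auto
  show "adj ?S = ?S" using u_unit by (intro adj_mixture) auto
  have "tr ?S = of_real (sum ?w ?J)" by (rule tr_mixture[OF u_unit])
  then show "tr ?S = 1" using w1 by simp
  show "?S *\<^sub>v \<Psi> = of_real (\<Sum>k<K. p k * (cmod (cinner (vs k) \<Psi>))\<^sup>2) \<cdot>\<^sub>v \<Psi>"
    using pvs by (intro twirl_mult_vec[OF avg U \<Psi>]) (simp add: stab_vecs_unit[OF d])
qed

lemma D_min_eq_D_max_of_clifford_average:
  assumes d: "d > 0" and \<Psi>: "\<Psi> \<in> carrier_vec (d ^ m)" "cinner \<Psi> \<Psi> = 1"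
    and avg: "averages_to_proj (d ^ m) \<Psi> I g" and cliff: "\<forall>x\<in>I. g x \<in> clifford d m"
  shows "D_min (d ^ m) (F_STAB d m) (proj_vec \<Psi>) = D_max (d ^ m) (F_STAB d m) (proj_vec \<Psi>)"
proof (rule antisym)
  show "D_min (d ^ m) (F_STAB d m) (proj_vec \<Psi>) \<le> D_max (d ^ m) (F_STAB d m) (proj_vec \<Psi>)"
    by (rule D_min_le_D_max_proj_vec[OF \<Psi>])
  show "D_max (d ^ m) (F_STAB d m) (proj_vec \<Psi>) \<le> D_min (d ^ m) (F_STAB d m) (proj_vec \<Psi>)"
    unfolding D_min_def
  proof (rule INF_greatest)
    fix \<sigma> assume "\<sigma> \<in> F_STAB d m"
    then obtain K :: nat and p :: "nat \<Rightarrow> real" and vs where pvs: "\<forall>k<K. p k \<ge> 0 \<and> vs k \<in> stab_vecs d m" "(\<Sum>k<K. p k) = 1"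
      and \<sigma>: "\<sigma> = mixture (d ^ m) {..<K} p vs"
      by (rule F_STAB_obtain_mixture)
    define q where "q = (\<Sum>k<K. p k * (cmod (cinner (vs k) \<Psi>))\<^sup>2)"
    have "Re (tr (supp_proj (d ^ m) (proj_vec \<Psi>) * \<sigma>)) = q"
      using \<Psi> pvs stab_vecs_unit[OF d] by (simp add: \<sigma> Re_tr_supp_proj_proj_vec_mult qform_mixture q_def)
    moreover have "D_max (d ^ m) (F_STAB d m) (proj_vec \<Psi>) \<le> ereal (- log 2 q)" if "q > 0"
    proof -
      obtain S where S: "S \<in> F_STAB d m" "psd (d ^ m) S" "adj S = S" "tr S = 1"
        and eig: "S *\<^sub>v \<Psi> = of_real q \<cdot>\<^sub>v \<Psi>"
        using clifford_twirl[OF d \<Psi>(1) avg cliff pvs] unfolding q_def by blast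
      show ?thesis
        using qform_ge_of_eigenvector[OF S(2,3) \<Psi> eig] that
        by (intro D_max_le_neg_log_of_dominating[OF \<Psi> S(1,2,4)]) auto
    qed
    ultimately show "D_max (d ^ m) (F_STAB d m) (proj_vec \<Psi>) \<le>
        (let q = Re (tr (supp_proj (d ^ m) (proj_vec \<Psi>) * \<sigma>)) in if q > 0 then ereal (- log 2 q) else \<infinity>)"
      by simp
  qed
qed

section \<open>Magic states from the third level of the Clifford hierarchy\<close>

lemma clifford_average_of_level3_state:
  assumes d: "d > 0" and V: "V \<in> clifford_level3 d t" and \<phi>: "\<phi> \<in> stab_vecs d t"
  obtains I :: "nat list set" and g where "averages_to_proj (d ^ t) (V *\<^sub>v \<phi>) I g"
    "\<forall>x\<in>I. g x \<in> clifford d t"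
proof -
  obtain C where C: "C \<in> clifford d t" and \<phi>_eq: "\<phi> = C *\<^sub>v unit_vec (d ^ t) 0"
    using \<phi> unfolding stab_vecs_def by blast
  have VU: "unitary (d ^ t) V" using V by (simp add: clifford_level3_def)
  have W: "unitary (d ^ t) (V * C)" using VU C by (intro unitary_mult) (simp_all add: clifford_def)
  let ?I = "{bs. set bs \<subseteq> {..<d} \<and> length bs = t}"
  let ?Z = "kron_list (\<lambda>b. Z_op d ^\<^sub>m b)"
  have "averages_to_proj (d ^ t) (unit_vec (d ^ t) 0) ?I ?Z"
    using averages_to_proj_kron_list[OF averages_to_proj_Z_op_pow[OF d], of t]
    by (simp add: vec_kron_pow_unit_vec[OF d])
  then have "averages_to_proj (d ^ t) ((V * C) *\<^sub>v unit_vec (d ^ t) 0) ?I (\<lambda>bs. (V * C) * ?Z bs * adj (V * C))"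
    by (intro averages_to_proj_conj[OF W]) auto
  moreover have "(V * C) *\<^sub>v unit_vec (d ^ t) 0 = V *\<^sub>v \<phi>"
    unfolding \<phi>_eq using unitary_carrier[OF VU] clifford_carrier[OF C] by (simp add: assoc_mult_mat_vec)
  moreover have "\<forall>bs\<in>?I. (V * C) * ?Z bs * adj (V * C) \<in> clifford d t"
    by (auto simp: kron_list_Z_op_pow intro!: clifford_level3_conj_pauli[OF V C] pauli_string_in_pauli_group)
  ultimately show thesis using that by simp
qed

theorem proposition5:
  fixes d t :: nat and V :: "complex mat" and \<phi> :: "complex vec"
  assumes "d = 2 \<or> (prime d \<and> odd d)"
    and "t \<ge> 1"
    and "V \<in> clifford_level3 d t"
    and "\<phi> \<in> stab_vecs d t"
  shows "\<forall>n::nat. n \<ge> 1 \<longrightarrow>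
     (let \<psi> = V *\<^sub>v \<phi>; \<rho> = kron_pow (proj_vec \<psi>) n in
       D_min (d ^ (t * n)) (F_STAB d (t * n)) \<rho> = D_max (d ^ (t * n)) (F_STAB d (t * n)) \<rho>)"
proof (intro allI impI)
  fix n :: nat
  have d: "d > 0" using assms(1) by (cases "d = 0") auto
  obtain I :: "nat list set" and g where avg: "averages_to_proj (d ^ t) (V *\<^sub>v \<phi>) I g"
    and cliff: "\<forall>x\<in>I. g x \<in> clifford d t"
    using clifford_average_of_level3_state[OF d assms(3,4)] by blast
  let ?\<Psi> = "vec_kron_pow (V *\<^sub>v \<phi>) n"
  have V: "unitary (d ^ t) V" using assms(3) by (simp add: clifford_level3_def)
  have \<psi>: "V *\<^sub>v \<phi> \<in> carrier_vec (d ^ t)" "cinner (V *\<^sub>v \<phi>) (V *\<^sub>v \<phi>) = 1"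
    using stab_vecs_unit[OF d assms(4)] cinner_unitary[OF V] unitary_carrier[OF V] by auto
  have avg_n: "averages_to_proj (d ^ (t * n)) ?\<Psi> {xs. set xs \<subseteq> I \<and> length xs = n} (kron_list g)"
    using averages_to_proj_kron_list[OF avg \<psi>(1)] by (simp add: power_mult)
  have cliff_n: "\<forall>xs\<in>{xs. set xs \<subseteq> I \<and> length xs = n}. kron_list g xs \<in> clifford d (t * n)"
  proof
    fix xs assume "xs \<in> {xs. set xs \<subseteq> I \<and> length xs = n}"
    then have "\<forall>x\<in>set xs. g x \<in> clifford d t" "length xs = n" using cliff by auto
    then show "kron_list g xs \<in> clifford d (t * n)" using kron_list_clifford[of xs g d t] by simp
  qed
  have \<Psi>: "?\<Psi> \<in> carrier_vec (d ^ (t * n))" "cinner ?\<Psi> ?\<Psi> = 1"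
  proof -
    have "dim_vec ?\<Psi> = d ^ (t * n)"
      using carrier_vecD[OF \<psi>(1)] by (simp only: vec_kron_pow_dim power_mult)
    then show "?\<Psi> \<in> carrier_vec (d ^ (t * n))" by (rule carrier_vecI)
    show "cinner ?\<Psi> ?\<Psi> = 1" by (rule cinner_vec_kron_pow[OF \<psi>(2)])
  qed
  show "let \<psi> = V *\<^sub>v \<phi>; \<rho> = kron_pow (proj_vec \<psi>) n in
       D_min (d ^ (t * n)) (F_STAB d (t * n)) \<rho> = D_max (d ^ (t * n)) (F_STAB d (t * n)) \<rho>"
    unfolding Let_def kron_pow_proj_vec by (rule D_min_eq_D_max_of_clifford_average[OF d \<Psi> avg_n cliff_n])
qed
end
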